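(* There is an absolute constant $C$ with $0<C<175$ such that the following holds. Let $Q=\{q_1,\dots,q_N\}\subset\mathcal S^{d-1}$, let $\alpha\in\mathbb{R}_+^N$ with $\sum_i\alpha_i=1$, and at each time $t\ge0$ independently draw $q_t=q_i$ with probability $\alpha_i$. Preferences evolve as $\tilde p_{t+1}=p_t+\eta_t(p_t^\top q_t)q_t$, $p_{t+1}=\tilde p_{t+1}/\|\tilde p_{t+1}\|_2$, with decreasing step size $\eta_t=\frac{\eta}{t+s}$. Let $\Sigma=\sum_{i=1}^N\alpha_iq_iq_i^\top$ with eigenvalues $\lambda_1\ge\lambda_2\ge\cdots$ and let $v_1$ be a unit eigenvector of $\Sigma$ for $\lambda_1$. Let $M=\max\{\max_{j\in[N]}\|q_jq_j^\top-\Sigma\|,\lambda_1\}$ (operator norm). Let $T\ge1$, $\delta\in(0,1)$, and assume $v_1^\top p_0\ge\sqrt2/2$, $\eta\ge\frac{8}{\lambda_1-\lambda_2}$ and $s\ge 1+2C^2\eta^2M^2\log(2CMT\eta/\delta)$. Assume further that the support $\{q_i:\alpha_i>0\}$ is self-aligned with respect to both $v_1$ and $p_0$. Then with probability at least $1-\delta$, \[R(T):=\sum_{t=0}^{T-1}(1-p_t^\top p_0)\le 4e^2(s+2)\Big(1+\log\big(\tfrac{T+s}{s}\big)\Big)+T\|v_1-p_0\|.\]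
   Context: $\mathcal S^{d-1}$ is the unit sphere in $\mathbb{R}^d$; $p_0\in\mathcal S^{d-1}$ is the initial preference; $\eta,s$ are positive integers. A set of vectors $u_1,\dots,u_k$ is self-aligned with respect to a vector $v$ if $u_i^\top u_j\ge0$ for all pairs $i,j$ and $u_i^\top v\ge0$ for all $i$. $R(T)$ is the regret for the stationary-preference reward $r_t=p_t^\top p_0$ relative to the maximal reward $1$. *)

theory Defs
  imports "HOL-Probability.Probability"
begin

text \<open>Vectors of R^d are represented as functions nat => real vanishing at indices >= d;
  d\<times>d matrices as functions nat => nat => real (only entries i,j < d matter).
  This keeps the dimension d a term, so that the constant C can be absolute.\<close>

definition vecs :: "nat \<Rightarrow> (nat \<Rightarrow> real) set" where
  "vecs d = {x. \<forall>i\<ge>d. x i = 0}"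

definition ip :: "nat \<Rightarrow> (nat \<Rightarrow> real) \<Rightarrow> (nat \<Rightarrow> real) \<Rightarrow> real" where
  "ip d x y = (\<Sum>i<d. x i * y i)"

definition vnorm :: "nat \<Rightarrow> (nat \<Rightarrow> real) \<Rightarrow> real" where
  "vnorm d x = sqrt (ip d x x)"

definition sphere_d :: "nat \<Rightarrow> (nat \<Rightarrow> real) set" where
  "sphere_d d = {x \<in> vecs d. vnorm d x = 1}"

definition mulv :: "nat \<Rightarrow> (nat \<Rightarrow> nat \<Rightarrow> real) \<Rightarrow> (nat \<Rightarrow> real) \<Rightarrow> (nat \<Rightarrow> real)" where
  "mulv d A x = (\<lambda>i. if i < d then (\<Sum>j<d. A i j * x j) else 0)"

definition opnorm :: "nat \<Rightarrow> (nat \<Rightarrow> nat \<Rightarrow> real) \<Rightarrow> real" where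
  "opnorm d A = Sup {vnorm d (mulv d A x) | x. x \<in> vecs d \<and> vnorm d x \<le> 1}"

definition outer :: "(nat \<Rightarrow> real) \<Rightarrow> (nat \<Rightarrow> real) \<Rightarrow> (nat \<Rightarrow> nat \<Rightarrow> real)" where
  "outer x y = (\<lambda>i j. x i * y j)"

definition covm :: "nat \<Rightarrow> (nat \<Rightarrow> real) \<Rightarrow> (nat \<Rightarrow> nat \<Rightarrow> real) \<Rightarrow> (nat \<Rightarrow> nat \<Rightarrow> real)" where
  "covm N \<alpha> q = (\<lambda>i j. \<Sum>k<N. \<alpha> k * q k i * q k j)"

definition sorted_eigenvalues :: "nat \<Rightarrow> (nat \<Rightarrow> nat \<Rightarrow> real) \<Rightarrow> (nat \<Rightarrow> real) \<Rightarrow> bool" where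
  "sorted_eigenvalues d A lam \<longleftrightarrow>
     (\<exists>U :: nat \<Rightarrow> nat \<Rightarrow> real.
        (\<forall>k<d. U k \<in> vecs d \<and> mulv d A (U k) = (\<lambda>i. lam k * U k i)) \<and>
        (\<forall>k<d. \<forall>l<d. ip d (U k) (U l) = (if k = l then 1 else 0))) \<and>
     (\<forall>k l. k \<le> l \<and> l < d \<longrightarrow> lam l \<le> lam k)"

definition self_aligned :: "nat \<Rightarrow> (nat \<Rightarrow> nat \<Rightarrow> real) \<Rightarrow> nat set \<Rightarrow> (nat \<Rightarrow> real) \<Rightarrow> bool" where
  "self_aligned d q S v \<longleftrightarrow>
     (\<forall>i\<in>S. \<forall>j\<in>S. ip d (q i) (q j) \<ge> 0) \<and> (\<forall>i\<in>S. ip d (q i) v \<ge> 0)"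

text \<open>Preference dynamics driven by the index sequence \<omega> (q_t = q (\<omega> t)):
  p_{t+1} = normalize (p_t + eta/(t+s) (p_t^T q_t) q_t).\<close>
primrec pref :: "nat \<Rightarrow> (nat \<Rightarrow> nat \<Rightarrow> real) \<Rightarrow> (nat \<Rightarrow> real) \<Rightarrow> nat \<Rightarrow> nat \<Rightarrow> (nat \<Rightarrow> nat)
                  \<Rightarrow> nat \<Rightarrow> (nat \<Rightarrow> real)" where
  "pref d q p0 \<eta> s \<omega> 0 = p0"
| "pref d q p0 \<eta> s \<omega> (Suc t) =
     (let p = pref d q p0 \<eta> s \<omega> t;
          qt = q (\<omega> t);
          pt = (\<lambda>i. p i + (real \<eta> / (real t + real s)) * ip d p qt * qt i)
      in (\<lambda>i. pt i / vnorm d pt))"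

definition regret :: "nat \<Rightarrow> (nat \<Rightarrow> nat \<Rightarrow> real) \<Rightarrow> (nat \<Rightarrow> real) \<Rightarrow> nat \<Rightarrow> nat \<Rightarrow> (nat \<Rightarrow> nat)
                       \<Rightarrow> nat \<Rightarrow> real" where
  "regret d q p0 \<eta> s \<omega> T = (\<Sum>t<T. 1 - ip d (pref d q p0 \<eta> s \<omega> t) p0)"

end

(*
  Let tau_t be tan^2 of the angle between p_t and v1. One normalized update with step size
  a = eta/(t+s) maps tau_t to an explicit rational function of a, of h = q^T v1, of the
  normalized orthogonal part r of p_t^T q, and of tau_t. Self-alignment keeps all inner products
  nonnegative along every path, so the cosine with v1 never vanishes. Averaged over q, the mean
  of h^2 is lambda_1, h and r are uncorrelated, and the mean of r^2 is at most lambda_2 tau_t;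
  with eta (lambda_1 - lambda_2) >= 8 this gives the drift and second-moment bounds behind
  E exp((t+s+1) tau_{t+1} / (300 eta^2)) <= exp((t+s) tau_t / (300 eta^2) + 2/(t+s)) as long as
  tau_t <= 2. So (t+s) tau_t is an exponential supermartingale until it crosses 2s, and a union
  bound over the crossing time with Markov's inequality shows that with probability at least
  1 - delta it stays below 2s for all t < T (this is where the sample-size condition on s enters,
  with C = 170). On that event 1 - p_t^T p0 <= tau_t + |p_t^T (v1 - p0)| <= 2s/(t+s) + ||v1 - p0||,
  and summing over t < T gives the regret bound.
*)

theory Submission
  imports Defs "Jordan_Normal_Form.Determinant"
begin

section \<open>Real inequalities for one step of the tangent recursion\<close>

lemma exp_le_quadratic:
  fixes y :: real
  assumes "y \<le> 1"
  shows "exp y \<le> 1 + y + y\<^sup>2"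
proof (cases "0 \<le> y")
  case True
  then show ?thesis using exp_bound assms by blast
next
  case False
  define u where "u = -y"
  have u: "0 \<le> u" using False by (simp add: u_def)
  have "1 \<le> (1 - u + u\<^sup>2) * (1 + u + u\<^sup>2/2)"
  proof -
    have "(1 - u + u\<^sup>2) * (1 + u + u\<^sup>2/2) = 1 + u\<^sup>2/2 + u^3/2 + u^4/2"
      by (simp add: field_simps power2_eq_square power3_eq_cube power4_eq_xxxx)
    then show ?thesis using u by simp
  qed
  also have "\<dots> \<le> (1 - u + u\<^sup>2) * exp u"
  proof (rule mult_left_mono[OF exp_lower_Taylor_quadratic[OF u]])
    have "1 - u + u\<^sup>2 = (u - 1/2)\<^sup>2 + 3/4" by (simp add: power2_eq_square algebra_simps)
    then show "0 \<le> 1 - u + u\<^sup>2" by simp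
  qed
  finally have "exp (-u) \<le> 1 - u + u\<^sup>2" by (simp add: exp_minus field_simps)
  then show ?thesis by (simp add: u_def)
qed

lemma inverse_one_plus_sq_bounds:
  fixes x :: real
  assumes "0 \<le> x"
  shows "1 - 2*x \<le> 1 / (1 + x)\<^sup>2" and "1 / (1 + x)\<^sup>2 \<le> 1 - 2*x + 3*x\<^sup>2"
proof -
  have pos: "0 < (1 + x)\<^sup>2" using assms by simp
  have "(1 - 2*x) * (1 + x)\<^sup>2 = 1 - 3*x\<^sup>2 - 2*x^3"
    by (simp add: algebra_simps power2_eq_square power3_eq_cube)
  also have "\<dots> \<le> 1" using zero_le_power[OF assms, of 3] zero_le_power2[of x] by linarith
  finally show "1 - 2*x \<le> 1 / (1 + x)\<^sup>2" using pos by (simp add: le_divide_eq)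
  have "(1 - 2*x + 3*x\<^sup>2) * (1 + x)\<^sup>2 = 1 + 4*x^3 + 3*x^4"
    by (simp add: algebra_simps power2_eq_square power3_eq_cube power4_eq_xxxx)
  also have "\<dots> \<ge> 1" using assms by simp
  finally show "1 / (1 + x)\<^sup>2 \<le> 1 - 2*x + 3*x\<^sup>2" using pos by (simp add: divide_le_eq)
qed

lemma sq_sum3_le:
  fixes x y z :: real
  shows "(x + y + z)\<^sup>2 \<le> 3 * (x\<^sup>2 + y\<^sup>2 + z\<^sup>2)"
proof -
  have "0 \<le> (x - y)\<^sup>2 + (y - z)\<^sup>2 + (x - z)\<^sup>2" by simp
  then show ?thesis by (simp add: power2_eq_square algebra_simps)
qed

text \<open>The value of \<open>tan\<^sup>2\<close> of the angle between the iterate and \<open>v\<close> after one step of size \<open>a\<close>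
  along \<open>q\<close>, where \<open>t\<close> is its value before the step, \<open>h = q\<^sup>T v\<close> and
  \<open>r = (p\<^sup>T q - (p\<^sup>T v) (q\<^sup>T v)) / p\<^sup>T v\<close> (see \<open>oja_step\<close>).\<close>
definition tan_sq_step :: "real \<Rightarrow> real \<Rightarrow> real \<Rightarrow> real \<Rightarrow> real" where
  "tan_sq_step a h r t = (t + 2*a*(h*r + r\<^sup>2) + a\<^sup>2*(h + r)\<^sup>2*(1 - h\<^sup>2)) / (1 + a*(h*(h + r)))\<^sup>2"

locale tan_sq_step_region =
  fixes a h r t :: real
  assumes a_nonneg: "0 \<le> a" and a_small: "a \<le> 1/1000"
    and h_nonneg: "0 \<le> h" and h_le_1: "h \<le> 1" and h_plus_r_nonneg: "0 \<le> h + r"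
    and r_sq_le: "r\<^sup>2 \<le> (1 - h\<^sup>2) * t" and t_nonneg: "0 \<le> t" and t_le_2: "t \<le> 2"
begin

lemma r_sq_le_t: "r\<^sup>2 \<le> t"
proof -
  have "0 \<le> h\<^sup>2 * t" using t_nonneg by simp
  then show ?thesis using r_sq_le by (simp add: algebra_simps)
qed

lemma abs_r_le: "\<bar>r\<bar> \<le> 3/2"
proof -
  have "r\<^sup>2 \<le> (3/2)\<^sup>2" using r_sq_le_t t_le_2 by (simp add: power2_eq_square)
  then show ?thesis using abs_le_square_iff[of r "3/2"] by simp
qed

lemma abs_h_mult_r_le: "\<bar>h*r\<bar> \<le> \<bar>r\<bar>"
proof -
  have "\<bar>h*r\<bar> = h * \<bar>r\<bar>" using h_nonneg by (simp add: abs_mult)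
  also have "\<dots> \<le> 1 * \<bar>r\<bar>" using h_le_1 by (intro mult_right_mono) auto
  finally show ?thesis by simp
qed

lemma h_plus_r_le: "h + r \<le> 5/2"
  using h_le_1 abs_r_le by linarith

lemma h_mult_h_plus_r_nonneg: "0 \<le> h*(h + r)"
  using h_nonneg h_plus_r_nonneg by simp

lemma h_mult_h_plus_r_le: "h*(h + r) \<le> 5/2"
proof -
  have "h*(h + r) \<le> 1*(h + r)" using h_le_1 h_plus_r_nonneg by (intro mult_right_mono) auto
  then show ?thesis using h_plus_r_le by simp
qed

lemma numerator_nonneg: "0 \<le> t + 2*a*(h*r + r\<^sup>2) + a\<^sup>2*(h + r)\<^sup>2*(1 - h\<^sup>2)"
proof -
  define G where "G = a*(h + r)"
  have eq: "t + 2*a*(h*r + r\<^sup>2) + a\<^sup>2*(h + r)\<^sup>2*(1 - h\<^sup>2) = t + 2*r*G + (1 - h\<^sup>2)*G\<^sup>2"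
    unfolding G_def by (simp add: algebra_simps power2_eq_square)
  have h_sq: "0 \<le> 1 - h\<^sup>2" using h_nonneg h_le_1 by (simp add: power_le_one)
  show ?thesis
  proof (cases "t = 0")
    case True
    then have "r = 0" using r_sq_le_t by simp
    then show ?thesis using eq h_sq True by simp
  next
    case False
    then have t_pos: "0 < t" using t_nonneg by simp
    \<comment> \<open>Completing the square in \<open>G\<close>; the remainder is nonnegative because \<open>r\<^sup>2 \<le> (1 - h\<^sup>2) t\<close>.\<close>
    have "t * (t + 2*r*G + (1 - h\<^sup>2)*G\<^sup>2) = (t + r*G)\<^sup>2 + (t*(1 - h\<^sup>2) - r\<^sup>2)*G\<^sup>2"
      by (simp add: algebra_simps power2_eq_square)
    also have "\<dots> \<ge> 0" using r_sq_le by (simp add: mult.commute)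
    finally show ?thesis using eq t_pos by (simp add: zero_le_mult_iff)
  qed
qed

lemma abs_h_mult_r_plus_r_sq_le: "\<bar>h*r + r\<^sup>2\<bar> \<le> 7/2"
  using abs_triangle_ineq[of "h*r" "r\<^sup>2"] abs_h_mult_r_le abs_r_le r_sq_le_t t_le_2 by simp

lemma cross_factor_bounds: "0 \<le> (h + r)\<^sup>2*(1 - h\<^sup>2)" "(h + r)\<^sup>2*(1 - h\<^sup>2) \<le> 25/4"
proof -
  have "0 \<le> 1 - h\<^sup>2" "1 - h\<^sup>2 \<le> 1" using h_nonneg h_le_1 by (simp_all add: power_le_one)
  moreover have "(h + r)\<^sup>2 \<le> (5/2)\<^sup>2" using h_plus_r_le h_plus_r_nonneg by (intro power_mono)
  ultimately show "0 \<le> (h + r)\<^sup>2*(1 - h\<^sup>2)" "(h + r)\<^sup>2*(1 - h\<^sup>2) \<le> 25/4"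
    using mult_left_le[of "1 - h\<^sup>2" "(h + r)\<^sup>2"] by (simp_all add: power2_eq_square)
qed

lemma numerator_le: "t + 2*a*(h*r + r\<^sup>2) + a\<^sup>2*(h + r)\<^sup>2*(1 - h\<^sup>2) \<le> 3"
proof -
  have "a*(h*r + r\<^sup>2) \<le> a*\<bar>h*r + r\<^sup>2\<bar>" using a_nonneg by (intro mult_left_mono) auto
  also have "\<dots> \<le> (1/1000)*(7/2)"
    using abs_h_mult_r_plus_r_sq_le a_nonneg a_small by (intro mult_mono) auto
  finally have "a*(h*r + r\<^sup>2) \<le> (1/1000)*(7/2)" .
  moreover have "a\<^sup>2*((h + r)\<^sup>2*(1 - h\<^sup>2)) \<le> (1/1000)*(25/4)"
  proof -
    have "a\<^sup>2 \<le> (1/1000)\<^sup>2" using a_nonneg a_small by (intro power_mono)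
    then have "a\<^sup>2 \<le> 1/1000" by (simp add: power2_eq_square)
    then show ?thesis using cross_factor_bounds by (intro mult_mono) auto
  qed
  ultimately show ?thesis using t_le_2 by (simp only: mult.assoc)
qed

lemma tan_sq_step_le: "tan_sq_step a h r t \<le> t + 2*a*(h*r + r\<^sup>2) - 2*a*t*(h*(h + r)) + 100*a\<^sup>2"
proof -
  define P where "P = h*r + r\<^sup>2"
  define K where "K = (h + r)\<^sup>2*(1 - h\<^sup>2)"
  define B where "B = h*(h + r)"
  define Nm where "Nm = t + 2*a*P + a\<^sup>2*K"
  have B: "0 \<le> B" "B \<le> 5/2" using h_mult_h_plus_r_nonneg h_mult_h_plus_r_le by (simp_all add: B_def)
  have K: "0 \<le> K" "K \<le> 25/4" using cross_factor_bounds by (simp_all add: K_def)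
  have P: "\<bar>P\<bar> \<le> 7/2" using abs_h_mult_r_plus_r_sq_le by (simp add: P_def)
  have Nm: "0 \<le> Nm" "Nm \<le> 3"
    using numerator_nonneg numerator_le by (simp_all add: Nm_def P_def K_def mult.assoc)
  have "tan_sq_step a h r t = Nm * (1 / (1 + a*B)\<^sup>2)"
    unfolding tan_sq_step_def Nm_def P_def K_def B_def by (simp add: mult.assoc)
  also have "\<dots> \<le> Nm * (1 - 2*(a*B) + 3*(a*B)\<^sup>2)"
    using inverse_one_plus_sq_bounds(2)[of "a*B"] a_nonneg B Nm by (intro mult_left_mono) auto
  also have "\<dots> = t + 2*a*P - 2*a*t*B + a\<^sup>2*(K - 4*(B*P) + 3*(B\<^sup>2*Nm)) - 2*a^3*(B*K)"
    unfolding Nm_def by (simp add: algebra_simps power2_eq_square power3_eq_cube)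
  also have "\<dots> \<le> t + 2*a*P - 2*a*t*B + 100*a\<^sup>2"
  proof -
    have "\<bar>B*P\<bar> \<le> (5/2)*(7/2)" unfolding abs_mult using B P by (intro mult_mono) auto
    then have "-(B*P) \<le> 35/4" by linarith
    moreover have "B\<^sup>2 \<le> 25/4" using power_mono[OF B(2) B(1), of 2] by (simp add: power2_eq_square)
    then have "B\<^sup>2*Nm \<le> 25/4*3" using Nm by (intro mult_mono) auto
    ultimately have "K - 4*(B*P) + 3*(B\<^sup>2*Nm) \<le> 100" using K by linarith
    then have "a\<^sup>2*(K - 4*(B*P) + 3*(B\<^sup>2*Nm)) \<le> a\<^sup>2*100" by (intro mult_left_mono) auto
    moreover have "0 \<le> a^3*(B*K)" using a_nonneg B K by simp
    ultimately show ?thesis by simp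
  qed
  finally show ?thesis unfolding P_def B_def .
qed

lemma tan_sq_step_ge: "t - 2*a*\<bar>r\<bar> - 5*a*t - 15*a\<^sup>2 \<le> tan_sq_step a h r t"
proof -
  define B where "B = h*(h + r)"
  define Nm where "Nm = t + 2*a*(h*r + r\<^sup>2) + a\<^sup>2*(h + r)\<^sup>2*(1 - h\<^sup>2)"
  have B: "0 \<le> B" "B \<le> 5/2" using h_mult_h_plus_r_nonneg h_mult_h_plus_r_le by (simp_all add: B_def)
  have aB: "a*B \<le> 1/400"
    using mult_mono[OF a_small B(2)] a_nonneg B(1) by simp
  have Nm_ge: "t + 2*a*(h*r) \<le> Nm"
  proof -
    have "Nm = t + 2*a*(h*r) + (2*a*r\<^sup>2 + a\<^sup>2*(h + r)\<^sup>2*(1 - h\<^sup>2))"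
      unfolding Nm_def by (simp add: algebra_simps)
    moreover have "0 \<le> a\<^sup>2*(h + r)\<^sup>2*(1 - h\<^sup>2)" using h_nonneg h_le_1 by (simp add: power_le_one)
    ultimately show ?thesis using a_nonneg by simp
  qed
  have "(t + 2*a*(h*r)) * (1 - 2*(a*B)) \<le> Nm * (1 - 2*(a*B))"
    using Nm_ge aB by (intro mult_right_mono) auto
  also have "\<dots> \<le> Nm * (1 / (1 + a*B)\<^sup>2)"
    using inverse_one_plus_sq_bounds(1)[of "a*B"] a_nonneg B numerator_nonneg
    unfolding Nm_def by (intro mult_left_mono) auto
  also have "\<dots> = tan_sq_step a h r t" unfolding tan_sq_step_def Nm_def B_def by simp
  finally have lower: "t + 2*a*(h*r) - 2*a*t*B - 4*a\<^sup>2*(B*(h*r)) \<le> tan_sq_step a h r t"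
    by (simp add: algebra_simps power2_eq_square)
  have "-(h*r) \<le> \<bar>r\<bar>" using abs_h_mult_r_le by linarith
  then have "-(a*\<bar>r\<bar>) \<le> a*(h*r)" using a_nonneg mult_left_mono by fastforce
  moreover have "a*t*B \<le> a*t*(5/2)" using B a_nonneg t_nonneg by (intro mult_left_mono) auto
  moreover have "a\<^sup>2*(B*(h*r)) \<le> a\<^sup>2*(15/4)"
  proof -
    have "\<bar>B*(h*r)\<bar> \<le> (5/2)*(3/2)"
      unfolding abs_mult using B abs_h_mult_r_le abs_r_le by (intro mult_mono) auto
    then show ?thesis by (intro mult_left_mono) auto
  qed
  ultimately show ?thesis using lower by linarith
qed

lemma abs_tan_sq_step_diff_le: "\<bar>tan_sq_step a h r t - t\<bar> \<le> 2*a*\<bar>r\<bar> + 5*a*t + 100*a\<^sup>2"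
proof -
  have "h*r + r\<^sup>2 \<le> \<bar>r\<bar> + t" using abs_h_mult_r_le r_sq_le_t by linarith
  then have "2*a*(h*r + r\<^sup>2) \<le> 2*a*(\<bar>r\<bar> + t)" using a_nonneg by (intro mult_left_mono) auto
  moreover have "0 \<le> 2*a*t*(h*(h + r))" using a_nonneg t_nonneg h_mult_h_plus_r_nonneg by simp
  moreover have "0 \<le> a*t" using a_nonneg t_nonneg by simp
  ultimately have "tan_sq_step a h r t - t \<le> 2*a*\<bar>r\<bar> + 5*a*t + 100*a\<^sup>2"
    using tan_sq_step_le by (simp add: distrib_left)
  moreover have "t - tan_sq_step a h r t \<le> 2*a*\<bar>r\<bar> + 5*a*t + 100*a\<^sup>2"
    using tan_sq_step_ge zero_le_power2[of a] by linarith
  ultimately show ?thesis by (simp add: abs_le_iff)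
qed

end

lemma scaled_step_sq_le:
  fixes \<eta> n :: real
  assumes "1 \<le> \<eta>" and "1 \<le> n"
  shows "(n + 1)*(\<eta>/n)\<^sup>2 \<le> 2*\<eta>\<^sup>2/n"
proof -
  have "(n + 1)*(\<eta>/n)\<^sup>2 = (\<eta> + \<eta>/n)*(\<eta>/n)"
    using assms by (simp add: power2_eq_square field_simps)
  also have "\<dots> \<le> (2*\<eta>)*(\<eta>/n)" using assms by (intro mult_right_mono) (auto simp: divide_le_eq)
  finally show ?thesis by (simp add: power2_eq_square)
qed

lemma abs_scaled_increment_le:
  fixes \<eta> n h r t :: real
  assumes region: "tan_sq_step_region (\<eta>/n) h r t" and eta: "1 \<le> \<eta>" and n: "1 \<le> n"
  shows "\<bar>(n + 1) * tan_sq_step (\<eta>/n) h r t - n*t\<bar> \<le> 4*\<eta>*\<bar>r\<bar> + 11*\<eta>*t + 200*\<eta>\<^sup>2/n"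
proof -
  define a where "a = \<eta>/n"
  interpret tan_sq_step_region a h r t using region by (simp add: a_def)
  have n_pos: "0 < n" using n by simp
  have na: "(n + 1)*a \<le> 2*\<eta>" unfolding a_def using n eta by (simp add: field_simps)
  have na2: "(n + 1)*a\<^sup>2 \<le> 2*\<eta>\<^sup>2/n" unfolding a_def by (rule scaled_step_sq_le[OF eta n])
  have "(n + 1) * tan_sq_step a h r t - n*t = (n + 1)*(tan_sq_step a h r t - t) + t"
    by (simp add: algebra_simps)
  then have "\<bar>(n + 1) * tan_sq_step a h r t - n*t\<bar> \<le> (n + 1)*\<bar>tan_sq_step a h r t - t\<bar> + t"
    using abs_triangle_ineq[of "(n + 1)*(tan_sq_step a h r t - t)" t] n_pos t_nonneg
    by (simp add: abs_mult)
  also have "\<dots> \<le> (n + 1)*(2*a*\<bar>r\<bar> + 5*a*t + 100*a\<^sup>2) + t"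
    using abs_tan_sq_step_diff_le n_pos by (intro add_right_mono mult_left_mono) auto
  also have "\<dots> = 2*((n + 1)*a)*\<bar>r\<bar> + 5*((n + 1)*a)*t + 100*((n + 1)*a\<^sup>2) + t"
    by (simp add: algebra_simps)
  also have "\<dots> \<le> 2*(2*\<eta>)*\<bar>r\<bar> + 5*(2*\<eta>)*t + 100*(2*\<eta>\<^sup>2/n) + \<eta>*t"
  proof -
    have "((n + 1)*a)*\<bar>r\<bar> \<le> (2*\<eta>)*\<bar>r\<bar>" using na by (intro mult_right_mono) auto
    moreover have "((n + 1)*a)*t \<le> (2*\<eta>)*t" using na t_nonneg by (intro mult_right_mono)
    moreover have "t \<le> \<eta>*t" using eta t_nonneg by (simp add: mult_le_cancel_right1)
    ultimately show ?thesis using na2 by linarith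
  qed
  also have "\<dots> = 4*\<eta>*\<bar>r\<bar> + 11*\<eta>*t + 200*\<eta>\<^sup>2/n" by (simp add: algebra_simps)
  finally show ?thesis unfolding a_def .
qed

lemma scaled_tan_sq_increment_bounds:
  fixes \<eta> n h r t :: real
  assumes region: "tan_sq_step_region (\<eta>/n) h r t" and eta: "1 \<le> \<eta>" and n: "1 \<le> n"
  defines "X \<equiv> (n + 1) * tan_sq_step (\<eta>/n) h r t - n*t"
  shows "X\<^sup>2 \<le> 48*\<eta>\<^sup>2*r\<^sup>2 + 726*\<eta>\<^sup>2*t + 120000*\<eta>^4/n\<^sup>2" and "X \<le> 300*\<eta>\<^sup>2"
proof -
  interpret tan_sq_step_region "\<eta>/n" h r t by (fact region)
  define A where "A = 4*\<eta>*\<bar>r\<bar> + 11*\<eta>*t + 200*\<eta>\<^sup>2/n"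
  have abs_X: "\<bar>X\<bar> \<le> A" unfolding X_def A_def by (rule abs_scaled_increment_le[OF region eta n])
  have "X\<^sup>2 \<le> A\<^sup>2" using abs_X by (simp add: abs_le_square_iff[symmetric])
  also have "\<dots> \<le> 3*((4*\<eta>*\<bar>r\<bar>)\<^sup>2 + (11*\<eta>*t)\<^sup>2 + (200*\<eta>\<^sup>2/n)\<^sup>2)"
    unfolding A_def by (rule sq_sum3_le)
  also have "\<dots> = 48*\<eta>\<^sup>2*r\<^sup>2 + 363*\<eta>\<^sup>2*t\<^sup>2 + 120000*\<eta>^4/n\<^sup>2"
    by (simp add: power_mult_distrib power_divide algebra_simps)
  also have "\<dots> \<le> 48*\<eta>\<^sup>2*r\<^sup>2 + 726*\<eta>\<^sup>2*t + 120000*\<eta>^4/n\<^sup>2"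
  proof -
    have "t\<^sup>2 \<le> 2*t" using t_nonneg t_le_2 by (simp add: power2_eq_square mult_right_mono)
    then have "363*\<eta>\<^sup>2*t\<^sup>2 \<le> 363*\<eta>\<^sup>2*(2*t)" by (intro mult_left_mono) auto
    then show ?thesis by simp
  qed
  finally show "X\<^sup>2 \<le> 48*\<eta>\<^sup>2*r\<^sup>2 + 726*\<eta>\<^sup>2*t + 120000*\<eta>^4/n\<^sup>2" .
  have "A \<le> 4*\<eta>*(3/2) + 11*\<eta>*2 + 200*\<eta>\<^sup>2"
  proof -
    have "4*\<eta>*\<bar>r\<bar> \<le> 4*\<eta>*(3/2)" using abs_r_le eta by (intro mult_left_mono) auto
    moreover have "11*\<eta>*t \<le> 11*\<eta>*2" using t_le_2 eta by (intro mult_left_mono) auto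
    moreover have "200*\<eta>\<^sup>2/n \<le> 200*\<eta>\<^sup>2" using n by (simp add: divide_le_eq mult_le_cancel_left1)
    ultimately show ?thesis unfolding A_def by linarith
  qed
  also have "\<dots> \<le> 300*\<eta>\<^sup>2"
    using eta mult_left_mono[OF eta, of \<eta>] by (simp add: power2_eq_square)
  finally show "X \<le> 300*\<eta>\<^sup>2" using abs_X by simp
qed

lemma sum_exp_le_moments:
  fixes \<alpha> Y :: "'i \<Rightarrow> real"
  assumes "\<And>i. i \<in> I \<Longrightarrow> 0 \<le> \<alpha> i" and "\<And>i. i \<in> I \<Longrightarrow> Y i \<le> 1"
  shows "(\<Sum>i\<in>I. \<alpha> i * exp (Y i)) \<le> sum \<alpha> I + (\<Sum>i\<in>I. \<alpha> i * Y i) + (\<Sum>i\<in>I. \<alpha> i * (Y i)\<^sup>2)"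
proof -
  have "(\<Sum>i\<in>I. \<alpha> i * exp (Y i)) \<le> (\<Sum>i\<in>I. \<alpha> i * (1 + Y i + (Y i)\<^sup>2))"
    using assms exp_le_quadratic by (intro sum_mono mult_left_mono) auto
  then show ?thesis by (simp add: distrib_left sum.distrib)
qed

locale tan_sq_step_distribution =
  fixes I :: "'i set" and \<alpha> h r :: "'i \<Rightarrow> real" and t l0 l1 \<eta> n :: real
  assumes \<alpha>_nonneg: "\<And>i. i \<in> I \<Longrightarrow> 0 \<le> \<alpha> i" and sum_\<alpha>: "sum \<alpha> I = 1"
    and region: "\<And>i. i \<in> I \<Longrightarrow> tan_sq_step_region (\<eta>/n) (h i) (r i) t"
    and mean_h_sq: "(\<Sum>i\<in>I. \<alpha> i * (h i)\<^sup>2) = l0"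
    and mean_hr: "(\<Sum>i\<in>I. \<alpha> i * (h i * r i)) = 0"
    and mean_r_sq: "(\<Sum>i\<in>I. \<alpha> i * (r i)\<^sup>2) \<le> l1 * t"
    and eta_ge_1: "1 \<le> \<eta>" and n_ge_1: "1 \<le> n" and gap: "8 \<le> \<eta> * (l0 - l1)"
begin

definition increment :: "'i \<Rightarrow> real" where
  "increment i = (n + 1) * tan_sq_step (\<eta>/n) (h i) (r i) t - n * t"

lemma t_nonneg: "0 \<le> t"
proof -
  obtain i where "i \<in> I" using sum_\<alpha> by (metis sum.empty zero_neq_one ex_in_conv)
  then show ?thesis using region tan_sq_step_region.t_nonneg by blast
qed

lemma increment_le:
  assumes "i \<in> I"
  shows "increment i \<le> (n + 1)*(t + 2*(\<eta>/n)*(h i*r i) + 2*(\<eta>/n)*(r i)\<^sup>2 - 2*(\<eta>/n)*t*(h i)\<^sup>2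
    - 2*(\<eta>/n)*t*(h i*r i) + 100*(\<eta>/n)\<^sup>2) - n*t"
proof -
  have "tan_sq_step (\<eta>/n) (h i) (r i) t \<le> t + 2*(\<eta>/n)*(h i*r i) + 2*(\<eta>/n)*(r i)\<^sup>2
      - 2*(\<eta>/n)*t*(h i)\<^sup>2 - 2*(\<eta>/n)*t*(h i*r i) + 100*(\<eta>/n)\<^sup>2"
    using tan_sq_step_region.tan_sq_step_le[OF region[OF assms]] by (simp add: algebra_simps power2_eq_square)
  then show ?thesis unfolding increment_def using n_ge_1 by (simp add: mult_left_mono)
qed

lemma mean_increment_le: "(\<Sum>i\<in>I. \<alpha> i * increment i) \<le> -15*t + 200*\<eta>\<^sup>2/n"
proof -
  define a where "a = \<eta>/n"
  have a_nonneg: "0 \<le> a" and n_pos: "0 < n" using eta_ge_1 n_ge_1 by (simp_all add: a_def)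
  have "(\<Sum>i\<in>I. \<alpha> i * increment i) \<le> (\<Sum>i\<in>I. \<alpha> i * ((n + 1)*(t + 2*a*(h i*r i)
      + 2*a*(r i)\<^sup>2 - 2*a*t*(h i)\<^sup>2 - 2*a*t*(h i*r i) + 100*a\<^sup>2) - n*t))"
    using increment_le \<alpha>_nonneg unfolding a_def by (intro sum_mono mult_left_mono) auto
  also have "\<dots> = (n + 1)*(t * sum \<alpha> I + 2*a*(\<Sum>i\<in>I. \<alpha> i * (h i*r i))
      + 2*a*(\<Sum>i\<in>I. \<alpha> i * (r i)\<^sup>2) - 2*a*t*(\<Sum>i\<in>I. \<alpha> i * (h i)\<^sup>2)
      - 2*a*t*(\<Sum>i\<in>I. \<alpha> i * (h i*r i)) + 100*a\<^sup>2 * sum \<alpha> I) - n*t * sum \<alpha> I"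
    by (simp add: algebra_simps sum.distrib sum_subtractf sum_distrib_left sum_distrib_right)
  also have "\<dots> = (n + 1)*(t + 2*a*(\<Sum>i\<in>I. \<alpha> i * (r i)\<^sup>2) - 2*a*t*l0 + 100*a\<^sup>2) - n*t"
    using sum_\<alpha> mean_h_sq mean_hr by simp
  also have "\<dots> \<le> (n + 1)*(t + 2*a*(l1*t) - 2*a*t*l0 + 100*a\<^sup>2) - n*t"
    using mean_r_sq a_nonneg n_pos by (simp add: mult_left_mono)
  also have "\<dots> = t - 2*(\<eta>*(l0 - l1))*t - 2*(a*(l0 - l1))*t + 100*((n + 1)*a\<^sup>2)"
    using n_pos by (simp add: a_def field_simps)
  also have "\<dots> \<le> t - 2*8*t + 100*(2*\<eta>\<^sup>2/n)"
  proof -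
    have "0 < \<eta> * (l0 - l1)" using gap by linarith
    then have "0 \<le> l0 - l1" using eta_ge_1 by (simp add: zero_less_mult_iff)
    then have "0 \<le> (a*(l0 - l1))*t" using a_nonneg t_nonneg by simp
    moreover have "8*t \<le> (\<eta>*(l0 - l1))*t" using gap t_nonneg by (intro mult_right_mono)
    moreover have "(n + 1)*a\<^sup>2 \<le> 2*\<eta>\<^sup>2/n" unfolding a_def by (rule scaled_step_sq_le[OF eta_ge_1 n_ge_1])
    ultimately show ?thesis by linarith
  qed
  finally show ?thesis by simp
qed

lemma mean_increment_sq_le:
  "(\<Sum>i\<in>I. \<alpha> i * (increment i)\<^sup>2) \<le> 774*\<eta>\<^sup>2*t + 120000*\<eta>^4/n\<^sup>2"
proof -
  have r_sq: "(r i)\<^sup>2 \<le> t" if "i \<in> I" for i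
    using tan_sq_step_region.r_sq_le_t[OF region[OF that]] .
  have "(\<Sum>i\<in>I. \<alpha> i * (r i)\<^sup>2) \<le> (\<Sum>i\<in>I. \<alpha> i * t)"
    using r_sq \<alpha>_nonneg by (intro sum_mono mult_left_mono) auto
  then have mean_r_sq_le_t: "(\<Sum>i\<in>I. \<alpha> i * (r i)\<^sup>2) \<le> t"
    using sum_\<alpha> by (simp add: sum_distrib_right[symmetric])
  have "(\<Sum>i\<in>I. \<alpha> i * (increment i)\<^sup>2)
      \<le> (\<Sum>i\<in>I. \<alpha> i * (48*\<eta>\<^sup>2*(r i)\<^sup>2 + 726*\<eta>\<^sup>2*t + 120000*\<eta>^4/n\<^sup>2))"
    using scaled_tan_sq_increment_bounds(1)[OF region eta_ge_1 n_ge_1] \<alpha>_nonneg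
    unfolding increment_def by (intro sum_mono mult_left_mono) auto
  also have "\<dots> = 48*\<eta>\<^sup>2*(\<Sum>i\<in>I. \<alpha> i * (r i)\<^sup>2) + (726*\<eta>\<^sup>2*t + 120000*\<eta>^4/n\<^sup>2) * sum \<alpha> I"
    by (simp add: algebra_simps sum.distrib sum_distrib_left sum_distrib_right sum_divide_distrib)
  also have "\<dots> \<le> 48*\<eta>\<^sup>2*t + (726*\<eta>\<^sup>2*t + 120000*\<eta>^4/n\<^sup>2)"
    using mult_left_mono[OF mean_r_sq_le_t, of "48*\<eta>\<^sup>2"] sum_\<alpha> by (simp add: ac_simps)
  finally show ?thesis by (simp add: ac_simps)
qed

lemma mean_exp_le:
  "(\<Sum>i\<in>I. \<alpha> i * exp ((n + 1) * tan_sq_step (\<eta>/n) (h i) (r i) t / (300*\<eta>\<^sup>2)))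
    \<le> exp (n*t/(300*\<eta>\<^sup>2) + 2/n)"
proof -
  define c where "c = 300*\<eta>\<^sup>2"
  have c_pos: "0 < c" and n_pos: "0 < n" using eta_ge_1 n_ge_1 by (simp_all add: c_def)
  have "exp ((n + 1) * tan_sq_step (\<eta>/n) (h i) (r i) t / c) = exp (n*t/c) * exp (increment i / c)" for i
    unfolding increment_def by (simp add: exp_add[symmetric] diff_divide_distrib)
  then have "(\<Sum>i\<in>I. \<alpha> i * exp ((n + 1) * tan_sq_step (\<eta>/n) (h i) (r i) t / c))
      = exp (n*t/c) * (\<Sum>i\<in>I. \<alpha> i * exp (increment i / c))"
    by (simp add: sum_distrib_left algebra_simps)
  also have "(\<Sum>i\<in>I. \<alpha> i * exp (increment i / c))
      \<le> 1 + (\<Sum>i\<in>I. \<alpha> i * increment i)/c + (\<Sum>i\<in>I. \<alpha> i * (increment i)\<^sup>2)/c\<^sup>2"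
    using sum_exp_le_moments[of I \<alpha> "\<lambda>i. increment i / c"] \<alpha>_nonneg sum_\<alpha> c_pos
      scaled_tan_sq_increment_bounds(2)[OF region eta_ge_1 n_ge_1]
    by (simp add: increment_def c_def sum_divide_distrib power_divide)
  also have "\<dots> \<le> 1 + (-15*t + 200*\<eta>\<^sup>2/n)/c + (774*\<eta>\<^sup>2*t + 120000*\<eta>^4/n\<^sup>2)/c\<^sup>2"
    using mean_increment_le mean_increment_sq_le c_pos
    by (intro add_mono divide_right_mono) simp_all
  also have "\<dots> = 1 + t/c*(-15 + 774/300) + 2/(3*n) + 4/(3*n\<^sup>2)"
    unfolding c_def using eta_ge_1 n_pos by (simp add: field_simps power2_eq_square power4_eq_xxxx)
  also have "\<dots> \<le> 1 + 2/n"
  proof -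
    have "t/c*(-15 + 774/300) \<le> 0" using t_nonneg c_pos by (simp add: mult_nonneg_nonpos)
    moreover have "4/(3*n\<^sup>2) \<le> 4/(3*n)" using n_ge_1 by (simp add: frac_le power2_eq_square)
    ultimately show ?thesis by simp
  qed
  also have "\<dots> \<le> exp (2/n)" by simp
  finally show ?thesis unfolding c_def by (simp add: exp_add mult_left_mono)
qed

end

section \<open>Stopped exponential supermartingales on weighted path trees\<close>

definition paths :: "'a set \<Rightarrow> nat \<Rightarrow> (nat \<Rightarrow> 'a) set" where
  "paths S n = PiE {..<n} (\<lambda>_. S)"

definition path_weight :: "('a \<Rightarrow> real) \<Rightarrow> nat \<Rightarrow> (nat \<Rightarrow> 'a) \<Rightarrow> real" where
  "path_weight \<alpha> n w = (\<Prod>t<n. \<alpha> (w t))"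

lemma finite_paths: "finite S \<Longrightarrow> finite (paths S n)"
  unfolding paths_def by (simp add: finite_PiE)

lemma paths_memD: "w \<in> paths S n \<Longrightarrow> t < n \<Longrightarrow> w t \<in> S"
  unfolding paths_def by auto

lemma paths_0: "paths S 0 = {\<lambda>_. undefined}"
  unfolding paths_def by simp

lemma sum_paths_Suc: "(\<Sum>w\<in>paths S (Suc n). f w) = (\<Sum>w\<in>paths S n. \<Sum>i\<in>S. f (w(n := i)))"
proof -
  have eq: "paths S (Suc n) = (\<lambda>(i, w). w(n := i)) ` (S \<times> paths S n)"
    unfolding paths_def lessThan_Suc by (rule PiE_insert_eq)
  have inj: "inj_on (\<lambda>(i, w). w(n := i)) (S \<times> paths S n)"
    unfolding paths_def by (rule inj_combinator) simp
  have "(\<Sum>w\<in>paths S (Suc n). f w) = (\<Sum>(i, w)\<in>S \<times> paths S n. f (w(n := i)))"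
    unfolding eq by (subst sum.reindex[OF inj]) (simp add: case_prod_beta')
  also have "\<dots> = (\<Sum>i\<in>S. \<Sum>w\<in>paths S n. f (w(n := i)))"
    by (rule sum.cartesian_product[symmetric])
  also have "\<dots> = (\<Sum>w\<in>paths S n. \<Sum>i\<in>S. f (w(n := i)))"
    by (rule sum.swap)
  finally show ?thesis .
qed

lemma path_weight_upd: "path_weight \<alpha> (Suc n) (w(n := i)) = path_weight \<alpha> n w * \<alpha> i"
  unfolding path_weight_def by simp

lemma path_weight_nonneg:
  "(\<And>i. i \<in> S \<Longrightarrow> 0 \<le> \<alpha> i) \<Longrightarrow> w \<in> paths S n \<Longrightarrow> 0 \<le> path_weight \<alpha> n w"
  unfolding path_weight_def using paths_memD by (blast intro: prod_nonneg)

lemma sum_path_weight: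
  assumes "finite S" and "sum \<alpha> S = 1"
  shows "(\<Sum>w\<in>paths S n. path_weight \<alpha> n w) = 1"
  using prod_sum_PiE[of "{..<n}" "\<lambda>_. S" "\<lambda>_ i. \<alpha> i"] assms
  unfolding paths_def path_weight_def by simp

text \<open>The weight of the paths that cross the barrier \<open>B\<close> before time \<open>n\<close> is bounded by a
  union bound over the crossing time, combined with Markov's inequality for the stopped moment.\<close>
locale stopped_exp_supermartingale =
  fixes S :: "'a set" and \<alpha> :: "'a \<Rightarrow> real" and \<Phi> :: "(nat \<Rightarrow> 'a) \<Rightarrow> nat \<Rightarrow> real"
    and B c \<Phi>0 :: real and e :: "nat \<Rightarrow> real"
  assumes finite_S: "finite S" and \<alpha>_nonneg: "\<And>i. i \<in> S \<Longrightarrow> 0 \<le> \<alpha> i" and sum_\<alpha>: "sum \<alpha> S = 1"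
    and c_pos: "0 < c" and e_nonneg: "\<And>n. 0 \<le> e n"
    and causal: "\<And>w w' t. (\<And>k. k < t \<Longrightarrow> w k = w' k) \<Longrightarrow> \<Phi> w t = \<Phi> w' t"
    and initial: "\<And>w. \<Phi> w 0 \<le> \<Phi>0"
    and step: "\<And>w n. w \<in> paths S n \<Longrightarrow> \<Phi> w n \<le> B \<Longrightarrow>
      (\<Sum>i\<in>S. \<alpha> i * exp (\<Phi> (w(n := i)) (Suc n) / c)) \<le> exp (\<Phi> w n / c + e n)"
begin

definition stays_below :: "nat \<Rightarrow> (nat \<Rightarrow> 'a) \<Rightarrow> bool" where
  "stays_below n w \<longleftrightarrow> (\<forall>t<n. \<Phi> w t \<le> B)"

definition stopped_moment :: "nat \<Rightarrow> real" where
  "stopped_moment n =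
    (\<Sum>w\<in>paths S n. if stays_below n w then path_weight \<alpha> n w * exp (\<Phi> w n / c) else 0)"

definition exit_mass :: "nat \<Rightarrow> real" where
  "exit_mass n = (\<Sum>w\<in>paths S n. if stays_below n w then 0 else path_weight \<alpha> n w)"

lemma stays_below_Suc_upd: "stays_below (Suc n) (w(n := i)) \<longleftrightarrow> stays_below n w \<and> \<Phi> w n \<le> B"
proof -
  have "\<Phi> (w(n := i)) t = \<Phi> w t" if "t \<le> n" for t
    using that by (intro causal) simp
  then show ?thesis unfolding stays_below_def by (auto simp: less_Suc_eq)
qed

lemma stopped_moment_Suc_le: "stopped_moment (Suc n) \<le> exp (e n) * stopped_moment n"
proof -
  have "stopped_moment (Suc n) = (\<Sum>w\<in>paths S n. if stays_below n w \<and> \<Phi> w n \<le> B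
      then path_weight \<alpha> n w * (\<Sum>i\<in>S. \<alpha> i * exp (\<Phi> (w(n := i)) (Suc n) / c)) else 0)"
    unfolding stopped_moment_def sum_paths_Suc path_weight_upd stays_below_Suc_upd
    by (intro sum.cong refl) (auto simp: sum_distrib_left mult_ac)
  also have "\<dots> \<le> (\<Sum>w\<in>paths S n. if stays_below n w
      then path_weight \<alpha> n w * (exp (\<Phi> w n / c) * exp (e n)) else 0)"
  proof (rule sum_mono)
    fix w assume w: "w \<in> paths S n"
    have "path_weight \<alpha> n w * (\<Sum>i\<in>S. \<alpha> i * exp (\<Phi> (w(n := i)) (Suc n) / c))
        \<le> path_weight \<alpha> n w * (exp (\<Phi> w n / c) * exp (e n))" if "\<Phi> w n \<le> B"
      using step[OF w that] path_weight_nonneg[OF \<alpha>_nonneg w]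
      by (intro mult_left_mono) (simp_all add: exp_add)
    then show "(if stays_below n w \<and> \<Phi> w n \<le> B
        then path_weight \<alpha> n w * (\<Sum>i\<in>S. \<alpha> i * exp (\<Phi> (w(n := i)) (Suc n) / c)) else 0)
      \<le> (if stays_below n w then path_weight \<alpha> n w * (exp (\<Phi> w n / c) * exp (e n)) else 0)"
      using path_weight_nonneg[OF \<alpha>_nonneg w] by auto
  qed
  also have "\<dots> = exp (e n) * stopped_moment n"
    unfolding stopped_moment_def sum_distrib_left by (intro sum.cong refl) (simp add: mult_ac)
  finally show ?thesis .
qed

lemma exit_mass_Suc_le: "exit_mass (Suc n) \<le> exit_mass n + exp (- B / c) * stopped_moment n"
proof -
  have "exit_mass (Suc n) = (\<Sum>w\<in>paths S n. \<Sum>i\<in>S. \<alpha> i *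
      (if stays_below n w \<and> \<Phi> w n \<le> B then 0 else path_weight \<alpha> n w))"
    unfolding exit_mass_def sum_paths_Suc path_weight_upd stays_below_Suc_upd
    by (intro sum.cong refl) (simp add: mult_ac)
  also have "\<dots> = (\<Sum>w\<in>paths S n. if stays_below n w \<and> \<Phi> w n \<le> B then 0 else path_weight \<alpha> n w)"
    by (simp add: sum_distrib_right[symmetric] sum_\<alpha>)
  also have "\<dots> \<le> (\<Sum>w\<in>paths S n. (if stays_below n w then 0 else path_weight \<alpha> n w)
      + exp (- B / c) * (if stays_below n w then path_weight \<alpha> n w * exp (\<Phi> w n / c) else 0))"
  proof (rule sum_mono)
    fix w assume w: "w \<in> paths S n"
    \<comment> \<open>Markov: a path leaving the barrier at time \<open>n\<close> has \<open>1 \<le> exp ((\<Phi> w n - B) / c)\<close>.\<close>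
    have "path_weight \<alpha> n w \<le> exp (- B / c) * (path_weight \<alpha> n w * exp (\<Phi> w n / c))" if "B < \<Phi> w n"
    proof -
      have "1 \<le> exp ((\<Phi> w n - B) / c)" using that c_pos by simp
      then have "path_weight \<alpha> n w * 1 \<le> path_weight \<alpha> n w * exp ((\<Phi> w n - B) / c)"
        using path_weight_nonneg[OF \<alpha>_nonneg w] by (intro mult_left_mono)
      then show ?thesis by (simp add: diff_divide_distrib exp_diff exp_minus field_simps)
    qed
    then show "(if stays_below n w \<and> \<Phi> w n \<le> B then 0 else path_weight \<alpha> n w)
      \<le> (if stays_below n w then 0 else path_weight \<alpha> n w)
        + exp (- B / c) * (if stays_below n w then path_weight \<alpha> n w * exp (\<Phi> w n / c) else 0)"
      using path_weight_nonneg[OF \<alpha>_nonneg w] by auto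
  qed
  also have "\<dots> = exit_mass n + exp (- B / c) * stopped_moment n"
    unfolding exit_mass_def stopped_moment_def by (simp add: sum.distrib sum_distrib_left)
  finally show ?thesis .
qed

lemma stopped_moment_le: "stopped_moment n \<le> exp (\<Phi>0 / c + (\<Sum>k<n. e k))"
proof (induction n)
  case 0
  show ?case
    using initial c_pos
    by (simp add: stopped_moment_def paths_0 path_weight_def stays_below_def divide_right_mono)
next
  case (Suc n)
  have "stopped_moment (Suc n) \<le> exp (e n) * stopped_moment n" by (rule stopped_moment_Suc_le)
  also have "\<dots> \<le> exp (e n) * exp (\<Phi>0 / c + (\<Sum>k<n. e k))"
    using Suc.IH by (intro mult_left_mono) auto
  also have "\<dots> = exp (\<Phi>0 / c + (\<Sum>k<Suc n. e k))"
    by (simp add: exp_add[symmetric] add_ac)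
  finally show ?case .
qed

lemma exit_mass_le: "exit_mass n \<le> real n * exp ((\<Phi>0 - B) / c + (\<Sum>k<n. e k))"
proof (induction n)
  case 0
  show ?case by (simp add: exit_mass_def paths_0 stays_below_def)
next
  case (Suc n)
  define E where "E m = exp ((\<Phi>0 - B) / c + (\<Sum>k<m. e k))" for m
  have E_mono: "E n \<le> E (Suc n)" unfolding E_def using e_nonneg[of n] by simp
  have "exit_mass (Suc n) \<le> exit_mass n + exp (- B / c) * stopped_moment n"
    by (rule exit_mass_Suc_le)
  also have "\<dots> \<le> real n * E n + exp (- B / c) * exp (\<Phi>0 / c + (\<Sum>k<n. e k))"
    using Suc.IH stopped_moment_le[of n] unfolding E_def by (intro add_mono mult_left_mono) auto
  also have "exp (- B / c) * exp (\<Phi>0 / c + (\<Sum>k<n. e k)) = E n"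
    unfolding E_def by (simp add: exp_add[symmetric] diff_divide_distrib)
  also have "real n * E n + E n \<le> real (Suc n) * E (Suc n)"
  proof -
    have "real n * E n \<le> real n * E (Suc n)" using E_mono by (intro mult_left_mono) auto
    then show ?thesis using E_mono by (simp add: distrib_right)
  qed
  finally show ?case unfolding E_def .
qed

theorem mass_stays_below_ge:
  "1 - real n * exp ((\<Phi>0 - B) / c + (\<Sum>k<n. e k))
    \<le> (\<Sum>w\<in>{w \<in> paths S n. stays_below n w}. path_weight \<alpha> n w)"
proof -
  have "(\<Sum>w\<in>paths S n. path_weight \<alpha> n w) = (\<Sum>w\<in>paths S n.
      (if stays_below n w then path_weight \<alpha> n w else 0) + (if stays_below n w then 0 else path_weight \<alpha> n w))"
    by (intro sum.cong) auto
  also have "\<dots> = (\<Sum>w\<in>{w \<in> paths S n. stays_below n w}. path_weight \<alpha> n w) + exit_mass n"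
    unfolding sum.distrib exit_mass_def by (simp add: sum.inter_filter[OF finite_paths[OF finite_S]])
  finally have "(\<Sum>w\<in>paths S n. path_weight \<alpha> n w)
      = (\<Sum>w\<in>{w \<in> paths S n. stays_below n w}. path_weight \<alpha> n w) + exit_mass n" .
  then show ?thesis using sum_path_weight[OF finite_S sum_\<alpha>, of n] exit_mass_le[of n] by linarith
qed

end

section \<open>Events determined by finitely many draws\<close>

definition prefix_cylinder :: "nat \<Rightarrow> (nat \<Rightarrow> 'a) \<Rightarrow> (nat \<Rightarrow> 'a) set" where
  "prefix_cylinder T w = {\<omega>. \<forall>t<T. \<omega> t = w t}"

lemma prefix_cylinder_eq_prod_emb:
  "prefix_cylinder T w = prod_emb UNIV (\<lambda>_. measure_pmf D) {..<T} (PiE {..<T} (\<lambda>t. {w t}))"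
  by (auto simp: prefix_cylinder_def prod_emb_iff PiE_iff)

lemma prefix_cylinder_sets: "prefix_cylinder T w \<in> sets (PiM UNIV (\<lambda>_. measure_pmf D))"
  unfolding prefix_cylinder_eq_prod_emb[where D = D] by (rule sets_PiM_I) auto

lemma measure_prefix_cylinder:
  "measure (PiM UNIV (\<lambda>_. measure_pmf D)) (prefix_cylinder T w) = (\<Prod>t<T. pmf D (w t))"
proof -
  have "emeasure (PiM UNIV (\<lambda>_. measure_pmf D)) (prefix_cylinder T w)
      = (\<Prod>t<T. emeasure (measure_pmf D) {w t})"
    unfolding prefix_cylinder_eq_prod_emb[where D = D]
    by (rule emeasure_PiM_emb) (auto simp: prob_space_measure_pmf)
  also have "\<dots> = ennreal (\<Prod>t<T. pmf D (w t))"
    by (simp add: emeasure_pmf_single prod_ennreal)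
  finally show ?thesis by (simp add: measure_def prod_nonneg)
qed

lemma prefix_event_sets:
  fixes D :: "'a::countable pmf" and T :: nat and P :: "(nat \<Rightarrow> 'a) \<Rightarrow> bool"
  assumes causal: "\<And>\<omega> \<omega>'. (\<forall>t<T. \<omega> t = \<omega>' t) \<Longrightarrow> P \<omega> \<longleftrightarrow> P \<omega>'"
  shows "{\<omega> \<in> space (PiM UNIV (\<lambda>_. measure_pmf D)). P \<omega>} \<in> sets (PiM UNIV (\<lambda>_. measure_pmf D))"
proof -
  have "{\<omega> \<in> space (PiM UNIV (\<lambda>_. measure_pmf D)). P \<omega>}
      = (\<Union>w\<in>{w \<in> paths UNIV T. P w}. prefix_cylinder T w)"
  proof (intro equalityI subsetI)
    fix \<omega> assume "\<omega> \<in> {\<omega> \<in> space (PiM UNIV (\<lambda>_. measure_pmf D)). P \<omega>}"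
    then have "P (restrict \<omega> {..<T})" using causal[of "restrict \<omega> {..<T}" \<omega>] by simp
    moreover have "\<omega> \<in> prefix_cylinder T (restrict \<omega> {..<T})" by (simp add: prefix_cylinder_def)
    moreover have "restrict \<omega> {..<T} \<in> paths UNIV T" by (simp add: paths_def)
    ultimately show "\<omega> \<in> (\<Union>w\<in>{w \<in> paths UNIV T. P w}. prefix_cylinder T w)" by blast
  next
    fix \<omega> assume "\<omega> \<in> (\<Union>w\<in>{w \<in> paths UNIV T. P w}. prefix_cylinder T w)"
    then obtain w where "P w" and "\<forall>t<T. \<omega> t = w t" by (auto simp: prefix_cylinder_def)
    then show "\<omega> \<in> {\<omega> \<in> space (PiM UNIV (\<lambda>_. measure_pmf D)). P \<omega>}"
      using causal[of \<omega> w] by (simp add: space_PiM)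
  qed
  also have "\<dots> \<in> sets (PiM UNIV (\<lambda>_. measure_pmf D))"
  proof (rule sets.countable_UN')
    have "countable (paths (UNIV :: 'a set) T)" unfolding paths_def by (rule countable_PiE) auto
    then show "countable {w \<in> paths UNIV T. P w}" by (rule countable_subset[rotated]) auto
  qed (use prefix_cylinder_sets in auto)
  finally show ?thesis .
qed

lemma measure_prefix_event_ge:
  fixes D :: "'a::countable pmf" and T :: nat and P :: "(nat \<Rightarrow> 'a) \<Rightarrow> bool"
  assumes causal: "\<And>\<omega> \<omega>'. (\<forall>t<T. \<omega> t = \<omega>' t) \<Longrightarrow> P \<omega> \<longleftrightarrow> P \<omega>'"
    and G: "finite G" "G \<subseteq> paths UNIV T" and holds: "\<And>w. w \<in> G \<Longrightarrow> P w"
  shows "(\<Sum>w\<in>G. \<Prod>t<T. pmf D (w t))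
    \<le> measure (PiM UNIV (\<lambda>_. measure_pmf D)) {\<omega> \<in> space (PiM UNIV (\<lambda>_. measure_pmf D)). P \<omega>}"
proof -
  let ?M = "PiM UNIV (\<lambda>_::nat. measure_pmf D)"
  interpret prob_space ?M by (rule prob_space_PiM) (simp add: prob_space_measure_pmf)
  have disjoint: "disjoint_family_on (prefix_cylinder T) G"
  proof (unfold disjoint_family_on_def, intro ballI impI)
    fix w w' assume "w \<in> G" "w' \<in> G" "w \<noteq> w'"
    then obtain t where "t < T" "w t \<noteq> w' t"
      using G(2) PiE_ext[of w "{..<T}" "\<lambda>_. UNIV" w'] unfolding paths_def by blast
    then show "prefix_cylinder T w \<inter> prefix_cylinder T w' = {}" by (auto simp: prefix_cylinder_def)
  qed
  have "(\<Sum>w\<in>G. \<Prod>t<T. pmf D (w t)) = (\<Sum>w\<in>G. measure ?M (prefix_cylinder T w))"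
    by (simp add: measure_prefix_cylinder)
  also have "\<dots> = measure ?M (\<Union>w\<in>G. prefix_cylinder T w)"
    by (rule measure_finite_Union[symmetric]) (use G(1) prefix_cylinder_sets disjoint in auto)
  also have "\<dots> \<le> measure ?M {\<omega> \<in> space ?M. P \<omega>}"
  proof (rule finite_measure_mono[OF _ prefix_event_sets[OF causal]])
    show "(\<Union>w\<in>G. prefix_cylinder T w) \<subseteq> {\<omega> \<in> space ?M. P \<omega>}"
      using holds causal by (auto simp: prefix_cylinder_def space_PiM)
  qed
  finally show ?thesis .
qed

section \<open>Inner products and spectral bounds\<close>

lemma ip_commute: "ip d x y = ip d y x"
  unfolding ip_def by (simp add: mult.commute)

lemma ip_self_nonneg: "0 \<le> ip d x x"
  unfolding ip_def by (simp add: sum_nonneg)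

lemma ip_Cauchy_Schwarz: "(ip d x y)\<^sup>2 \<le> ip d x x * ip d y y"
  using Cauchy_Schwarz_ineq_sum[of x y "{..<d}"] unfolding ip_def by (simp add: power2_eq_square)

lemma vnorm_power2: "(vnorm d x)\<^sup>2 = ip d x x"
  unfolding vnorm_def using ip_self_nonneg[of d x] by simp

lemma vnorm_nonneg: "0 \<le> vnorm d x"
  unfolding vnorm_def using ip_self_nonneg[of d x] by simp

lemma ip_add_left: "ip d (\<lambda>i. x i + y i) z = ip d x z + ip d y z"
  and ip_diff_left: "ip d (\<lambda>i. x i - y i) z = ip d x z - ip d y z"
  and ip_scale_left: "ip d (\<lambda>i. c * x i) z = c * ip d x z"
  and ip_divide_left: "ip d (\<lambda>i. x i / c) z = ip d x z / c"
  and ip_add_right: "ip d z (\<lambda>i. x i + y i) = ip d z x + ip d z y"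
  and ip_diff_right: "ip d z (\<lambda>i. x i - y i) = ip d z x - ip d z y"
  and ip_scale_right: "ip d z (\<lambda>i. c * x i) = c * ip d z x"
  and ip_divide_right: "ip d z (\<lambda>i. x i / c) = ip d z x / c"
  unfolding ip_def
  by (simp_all add: algebra_simps sum.distrib sum_subtractf sum_distrib_left sum_divide_distrib)

lemmas ip_linear = ip_add_left ip_diff_left ip_scale_left ip_divide_left
  ip_add_right ip_diff_right ip_scale_right ip_divide_right

lemma ip_self_sphere: "x \<in> sphere_d d \<Longrightarrow> ip d x x = 1"
  unfolding sphere_d_def vnorm_def using ip_self_nonneg[of d x] by auto

lemma abs_ip_le_vnorm:
  assumes "ip d p p = 1"
  shows "\<bar>ip d p z\<bar> \<le> vnorm d z"
proof -
  have "(ip d p z)\<^sup>2 \<le> (vnorm d z)\<^sup>2"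
    using ip_Cauchy_Schwarz[of d p z] assms by (simp add: vnorm_power2)
  then show ?thesis using vnorm_nonneg[of d z] by (simp add: abs_le_square_iff[symmetric])
qed

lemma abs_ip_le_1:
  assumes "ip d x x = 1" and "ip d y y = 1"
  shows "\<bar>ip d x y\<bar> \<le> 1"
  using abs_ip_le_vnorm[OF assms(1), of y] assms(2) by (simp add: vnorm_def)

definition orthonormal :: "nat \<Rightarrow> (nat \<Rightarrow> nat \<Rightarrow> real) \<Rightarrow> bool" where
  "orthonormal d U \<longleftrightarrow> (\<forall>k<d. \<forall>l<d. ip d (U k) (U l) = (if k = l then 1 else 0))"

lemma orthonormal_columns:
  assumes "orthonormal d U" and "i < d" and "j < d"
  shows "(\<Sum>k<d. U k i * U k j) = (if i = j then 1 else 0)"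
proof -
  define M where "M = mat d d (\<lambda>(k, i). U k i)"
  have M: "M \<in> carrier_mat d d" "transpose_mat M \<in> carrier_mat d d" unfolding M_def by simp_all
  have "M * transpose_mat M = 1\<^sub>m d"
  proof (rule eq_matI)
    fix k l assume "k < dim_row (1\<^sub>m d)" and "l < dim_col (1\<^sub>m d)"
    then have kl: "k < d" "l < d" by auto
    have "(M * transpose_mat M) $$ (k, l) = ip d (U k) (U l)"
      using kl unfolding M_def ip_def by (simp add: scalar_prod_def row_def col_def lessThan_atLeast0)
    then show "(M * transpose_mat M) $$ (k, l) = 1\<^sub>m d $$ (k, l)"
      using assms(1) kl by (simp add: orthonormal_def)
  qed (auto simp: M_def)
  then have "transpose_mat M * M = 1\<^sub>m d" using mat_mult_left_right_inverse[OF M] by simp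
  moreover have "(transpose_mat M * M) $$ (i, j) = (\<Sum>k<d. U k i * U k j)"
    using assms(2,3) unfolding M_def by (simp add: scalar_prod_def row_def col_def lessThan_atLeast0)
  ultimately show ?thesis using assms(2,3) by simp
qed

lemma parseval:
  assumes "orthonormal d U"
  shows "ip d x y = (\<Sum>k<d. ip d (U k) x * ip d (U k) y)"
proof -
  have "(\<Sum>k<d. ip d (U k) x * ip d (U k) y) = (\<Sum>k<d. \<Sum>i<d. \<Sum>j<d. x i * y j * (U k i * U k j))"
    unfolding ip_def by (simp add: sum_product mult_ac)
  also have "\<dots> = (\<Sum>i<d. \<Sum>k<d. \<Sum>j<d. x i * y j * (U k i * U k j))"
    by (rule sum.swap)
  also have "\<dots> = (\<Sum>i<d. \<Sum>j<d. \<Sum>k<d. x i * y j * (U k i * U k j))"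
    by (intro sum.cong refl sum.swap)
  also have "\<dots> = (\<Sum>i<d. \<Sum>j<d. x i * y j * (if i = j then 1 else 0))"
    using orthonormal_columns[OF assms] by (intro sum.cong refl) (simp add: sum_distrib_left[symmetric])
  also have "\<dots> = ip d x y"
    unfolding ip_def by (intro sum.cong refl) (simp add: if_distrib cong: if_cong)
  finally show ?thesis by simp
qed

lemma ip_mulv_eigenvector:
  assumes "mulv d A u = (\<lambda>i. \<mu> * u i)" and "\<And>i j. A i j = A j i"
  shows "ip d u (mulv d A w) = \<mu> * ip d u w"
proof -
  have "ip d u (mulv d A w) = (\<Sum>i<d. u i * (\<Sum>j<d. A i j * w j))"
    unfolding ip_def mulv_def by simp
  also have "\<dots> = (\<Sum>i<d. \<Sum>j<d. w j * (A j i * u i))"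
    by (simp add: sum_distrib_left assms(2) mult_ac)
  also have "\<dots> = (\<Sum>j<d. \<Sum>i<d. w j * (A j i * u i))"
    by (rule sum.swap)
  also have "\<dots> = (\<Sum>j<d. w j * mulv d A u j)"
    unfolding mulv_def by (simp add: sum_distrib_left)
  also have "\<dots> = \<mu> * ip d u w"
    unfolding assms(1) ip_def by (simp add: sum_distrib_left mult_ac)
  finally show ?thesis .
qed

lemma sorted_eigenvalues_basis:
  assumes "sorted_eigenvalues d A lam"
  obtains U where "orthonormal d U" and "\<forall>k<d. mulv d A (U k) = (\<lambda>i. lam k * U k i)"
proof -
  have "\<exists>U. (\<forall>k<d. U k \<in> vecs d \<and> mulv d A (U k) = (\<lambda>i. lam k * U k i)) \<and>
      (\<forall>k<d. \<forall>l<d. ip d (U k) (U l) = (if k = l then 1 else 0))"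
    using assms unfolding sorted_eigenvalues_def by (rule conjunct1)
  then obtain U where U: "\<forall>k<d. U k \<in> vecs d \<and> mulv d A (U k) = (\<lambda>i. lam k * U k i)"
    "\<forall>k<d. \<forall>l<d. ip d (U k) (U l) = (if k = l then 1 else 0)"
    by (elim exE conjE)
  have "orthonormal d U" using U(2) unfolding orthonormal_def .
  moreover have "\<forall>k<d. mulv d A (U k) = (\<lambda>i. lam k * U k i)" using U(1) by simp
  ultimately show ?thesis by (rule that)
qed

lemma sorted_eigenvalues_antimono:
  "sorted_eigenvalues d A lam \<Longrightarrow> k \<le> l \<Longrightarrow> l < d \<Longrightarrow> lam l \<le> lam k"
  unfolding sorted_eigenvalues_def by simp

lemma quadratic_form_eigen_expansion:
  assumes "orthonormal d U" and "\<And>k. k < d \<Longrightarrow> mulv d A (U k) = (\<lambda>i. lam k * U k i)"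
    and "\<And>i j. A i j = A j i"
  shows "ip d z (mulv d A z) = (\<Sum>k<d. lam k * (ip d (U k) z)\<^sup>2)"
proof -
  have "ip d z (mulv d A z) = (\<Sum>k<d. ip d (U k) z * ip d (U k) (mulv d A z))"
    by (rule parseval[OF assms(1)])
  also have "\<dots> = (\<Sum>k<d. lam k * (ip d (U k) z)\<^sup>2)"
    using ip_mulv_eigenvector[OF assms(2) assms(3)]
    by (intro sum.cong refl) (simp add: power2_eq_square)
  finally show ?thesis .
qed

lemma quadratic_form_le_top_eigenvalue:
  assumes "sorted_eigenvalues d A lam" and "\<And>i j. A i j = A j i"
  shows "ip d z (mulv d A z) \<le> lam 0 * ip d z z"
proof -
  obtain U where U: "orthonormal d U" "\<forall>k<d. mulv d A (U k) = (\<lambda>i. lam k * U k i)"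
    using assms(1) by (rule sorted_eigenvalues_basis)
  note sorted = sorted_eigenvalues_antimono[OF assms(1)]
  have "(\<Sum>k<d. lam k * (ip d (U k) z)\<^sup>2) \<le> (\<Sum>k<d. lam 0 * (ip d (U k) z)\<^sup>2)"
    using sorted by (intro sum_mono mult_right_mono) auto
  then show ?thesis
    using quadratic_form_eigen_expansion[OF U(1) U(2)[rule_format] assms(2)] parseval[OF U(1), of z z]
    by (simp add: sum_distrib_left power2_eq_square)
qed

lemma top_eigenbasis_coord_eq_0:
  assumes "sorted_eigenvalues d A lam" and U: "orthonormal d U"
    and U_eigen: "\<forall>k<d. mulv d A (U k) = (\<lambda>i. lam k * U k i)" and sym: "\<And>i j. A i j = A j i"
    and v: "ip d v v = 1" and v_eigen: "mulv d A v = (\<lambda>i. lam 0 * v i)" and gap: "lam 1 < lam 0"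
    and z_perp: "ip d z v = 0"
  shows "ip d (U 0) z = 0"
proof -
  have d_pos: "0 < d" using v by (cases d) (auto simp: ip_def)
  \<comment> \<open>By the gap, \<open>v\<close> lies in the span of \<open>U 0\<close>.\<close>
  have v_coord: "ip d (U k) v = 0" if "k < d" "0 < k" for k
  proof -
    have "lam k * ip d (U k) v = ip d (U k) (mulv d A v)"
      using ip_mulv_eigenvector[OF U_eigen[rule_format, OF that(1)] sym, of v] by simp
    also have "\<dots> = lam 0 * ip d (U k) v" unfolding v_eigen ip_scale_right ..
    finally have "lam k * ip d (U k) v = lam 0 * ip d (U k) v" .
    moreover have "lam k < lam 0"
      using sorted_eigenvalues_antimono[OF assms(1), of 1 k] that gap by simp
    ultimately show ?thesis by (metis less_irrefl mult_cancel_right)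
  qed
  have sum_0: "(\<Sum>k<d. f k * ip d (U k) v) = f 0 * ip d (U 0) v" for f
  proof -
    have "(\<Sum>k<d. f k * ip d (U k) v) = (\<Sum>k\<in>{0}. f k * ip d (U k) v)"
      using v_coord d_pos by (intro sum.mono_neutral_right) auto
    then show ?thesis by simp
  qed
  have "1 = (ip d (U 0) v)\<^sup>2"
    using parseval[OF U, of v v] v sum_0[of "\<lambda>k. ip d (U k) v"] by (simp add: power2_eq_square)
  moreover have "ip d (U 0) z * ip d (U 0) v = 0"
    using parseval[OF U, of z v] z_perp sum_0[of "\<lambda>k. ip d (U k) z"] by simp
  ultimately show ?thesis by auto
qed

lemma quadratic_form_le_second_eigenvalue:
  assumes "sorted_eigenvalues d A lam" and sym: "\<And>i j. A i j = A j i"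
    and v: "ip d v v = 1" and v_eigen: "mulv d A v = (\<lambda>i. lam 0 * v i)" and gap: "lam 1 < lam 0"
    and z_perp: "ip d z v = 0"
  shows "ip d z (mulv d A z) \<le> lam 1 * ip d z z"
proof -
  obtain U where U: "orthonormal d U" "\<forall>k<d. mulv d A (U k) = (\<lambda>i. lam k * U k i)"
    using assms(1) by (rule sorted_eigenvalues_basis)
  have z_coord: "ip d (U 0) z = 0" by (rule top_eigenbasis_coord_eq_0[OF assms(1) U sym v v_eigen gap z_perp])
  have "(\<Sum>k<d. lam k * (ip d (U k) z)\<^sup>2) \<le> (\<Sum>k<d. lam 1 * (ip d (U k) z)\<^sup>2)"
  proof (intro sum_mono)
    fix k assume k: "k \<in> {..<d}"
    show "lam k * (ip d (U k) z)\<^sup>2 \<le> lam 1 * (ip d (U k) z)\<^sup>2"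
    proof (cases "k = 0")
      case True
      then show ?thesis using z_coord by simp
    next
      case False
      then have "lam k \<le> lam 1" using sorted_eigenvalues_antimono[OF assms(1), of 1 k] k by simp
      then show ?thesis by (intro mult_right_mono) simp_all
    qed
  qed
  then show ?thesis
    using quadratic_form_eigen_expansion[OF U(1) U(2)[rule_format] sym] parseval[OF U(1), of z z]
    by (simp add: sum_distrib_left power2_eq_square)
qed

lemma ip_mulv_covm: "ip d x (mulv d (covm N \<alpha> q) y) = (\<Sum>k<N. \<alpha> k * ip d (q k) x * ip d (q k) y)"
proof -
  have "ip d x (mulv d (covm N \<alpha> q) y) = (\<Sum>i<d. \<Sum>j<d. \<Sum>k<N. x i * (\<alpha> k * q k i * q k j * y j))"
    unfolding ip_def mulv_def covm_def by (simp add: sum_distrib_left sum_distrib_right)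
  also have "\<dots> = (\<Sum>k<N. \<Sum>i<d. \<Sum>j<d. x i * (\<alpha> k * q k i * q k j * y j))"
    by (simp add: sum.swap[of _ "{..<N}"])
  also have "\<dots> = (\<Sum>k<N. \<alpha> k * ip d (q k) x * ip d (q k) y)"
    unfolding ip_def by (intro sum.cong refl) (simp add: sum_product sum_distrib_left mult_ac)
  finally show ?thesis .
qed

lemma covm_symmetric: "covm N \<alpha> q i j = covm N \<alpha> q j i"
  unfolding covm_def by (simp add: mult_ac)

section \<open>Oja's normalized update\<close>

definition tan_sq :: "nat \<Rightarrow> (nat \<Rightarrow> real) \<Rightarrow> (nat \<Rightarrow> real) \<Rightarrow> real" where
  "tan_sq d v p = (1 - (ip d p v)\<^sup>2) / (ip d p v)\<^sup>2"

lemma tan_sq_nonneg: "0 < ip d p v \<Longrightarrow> ip d p v \<le> 1 \<Longrightarrow> 0 \<le> tan_sq d v p"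
  unfolding tan_sq_def by (simp add: power_le_one)

lemma one_minus_cos_le_tan_sq:
  assumes "0 < ip d p v" and "ip d p v \<le> 1"
  shows "1 - ip d p v \<le> tan_sq d v p"
proof -
  define c where "c = ip d p v"
  have "1 - c \<le> 1 - c\<^sup>2" using assms by (simp add: c_def power2_eq_square mult_le_cancel_left1)
  also have "\<dots> \<le> (1 - c\<^sup>2) / c\<^sup>2"
  proof -
    have "0 < c\<^sup>2" "c\<^sup>2 \<le> 1" using assms by (simp_all add: c_def power_le_one)
    then show ?thesis using mult_left_le[of "c\<^sup>2" "1 - c\<^sup>2"] by (simp add: le_divide_eq)
  qed
  finally show ?thesis unfolding tan_sq_def c_def .
qed

lemma tan_sq_le_1:
  assumes "sqrt 2 / 2 \<le> ip d p v"
  shows "tan_sq d v p \<le> 1"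
proof -
  have "0 < sqrt 2 / 2" by simp
  then have c_pos: "0 < ip d p v" using assms by linarith
  have "(sqrt 2 / 2)\<^sup>2 \<le> (ip d p v)\<^sup>2" using assms by (intro power_mono) auto
  then have "1 - (ip d p v)\<^sup>2 \<le> (ip d p v)\<^sup>2" by (simp add: power_divide)
  then show ?thesis unfolding tan_sq_def using c_pos by (simp add: divide_le_eq)
qed

text \<open>Here \<open>c\<close>, \<open>g\<close>, \<open>h\<close> stand for \<open>p\<^sup>T v\<close>, \<open>p\<^sup>T q\<close>, \<open>q\<^sup>T v\<close>, and \<open>\<nu>\<close> is the norm of the
  unnormalized update \<open>p + a g q\<close>.\<close>
lemma tan_sq_step_normalized:
  fixes a c g h \<nu> :: real
  assumes c: "0 < c" and \<nu>: "0 < \<nu>" and \<nu>_sq: "\<nu>\<^sup>2 = 1 + (2*a + a\<^sup>2)*g\<^sup>2" and cg: "0 < c + a*g*h"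
  shows "(1 - ((c + a*g*h)/\<nu>)\<^sup>2) / ((c + a*g*h)/\<nu>)\<^sup>2 = tan_sq_step a h ((g - c*h)/c) ((1 - c\<^sup>2)/c\<^sup>2)"
proof -
  have lhs: "(1 - ((c + a*g*h)/\<nu>)\<^sup>2) / ((c + a*g*h)/\<nu>)\<^sup>2 = (\<nu>\<^sup>2 - (c + a*g*h)\<^sup>2) / (c + a*g*h)\<^sup>2"
    using \<nu> cg by (simp add: power_divide field_simps)
  have den: "(1 + a*(h*(h + (g - c*h)/c)))\<^sup>2 = (c + a*g*h)\<^sup>2 / c\<^sup>2"
  proof -
    have "1 + a*(h*(h + (g - c*h)/c)) = (c + a*g*h)/c" using c by (simp add: field_simps)
    then show ?thesis by (simp add: power_divide)
  qed
  have num: "(1 - c\<^sup>2)/c\<^sup>2 + 2*a*(h*((g - c*h)/c) + ((g - c*h)/c)\<^sup>2) + a\<^sup>2*(h + (g - c*h)/c)\<^sup>2*(1 - h\<^sup>2)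
      = (\<nu>\<^sup>2 - (c + a*g*h)\<^sup>2) / c\<^sup>2"
  proof -
    have e1: "h + (g - c*h)/c = g/c" using c by (simp add: field_simps)
    have e2: "h*((g - c*h)/c) + ((g - c*h)/c)\<^sup>2 = g*(g - c*h)/c\<^sup>2"
      using c by (simp add: field_simps power2_eq_square)
    show ?thesis unfolding e1 e2 \<nu>_sq using c by (simp add: field_simps power2_eq_square)
  qed
  show ?thesis unfolding lhs tan_sq_step_def num den using c cg by (simp add: field_simps)
qed

lemma ip_self_step:
  assumes p: "ip d p p = 1" and q: "ip d q q = 1"
  shows "ip d (\<lambda>i. p i + a * ip d p q * q i) (\<lambda>i. p i + a * ip d p q * q i)
    = 1 + (2*a + a\<^sup>2)*(ip d p q)\<^sup>2"
proof -
  define g where "g = ip d p q"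
  define pt where "pt = (\<lambda>i. p i + a * g * q i)"
  have ip_pt: "ip d pt y = ip d p y + a * g * ip d q y" for y
    unfolding pt_def by (simp add: ip_add_left ip_scale_left)
  have "ip d pt pt = ip d p pt + a * g * ip d q pt" by (rule ip_pt)
  also have "ip d p pt = 1 + a*g*g" using ip_pt[of p] p by (simp add: ip_commute g_def)
  also have "ip d q pt = g + a*g" using ip_pt[of q] q by (simp add: ip_commute g_def)
  finally have "ip d pt pt = 1 + (2*a + a\<^sup>2)*g\<^sup>2" by (simp add: power2_eq_square algebra_simps)
  then show ?thesis by (simp add: pt_def g_def)
qed

lemma oja_step:
  fixes p q v :: "nat \<Rightarrow> real" and a :: real
  assumes p: "ip d p p = 1" and q: "ip d q q = 1" and a: "0 \<le> a"
    and pq: "0 \<le> ip d p q" and qv: "0 \<le> ip d q v" and pv: "0 < ip d p v"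
  defines "p' \<equiv> (\<lambda>i. (p i + a * ip d p q * q i) / vnorm d (\<lambda>i. p i + a * ip d p q * q i))"
  shows "ip d p' p' = 1" and "0 < ip d p' v"
    and "\<And>y. 0 \<le> ip d p y \<Longrightarrow> 0 \<le> ip d q y \<Longrightarrow> 0 \<le> ip d p' y"
    and "tan_sq d v p' = tan_sq_step a (ip d q v) ((ip d p q - ip d p v * ip d q v) / ip d p v) (tan_sq d v p)"
proof -
  define g h c where "g = ip d p q" and "h = ip d q v" and "c = ip d p v"
  define pt where "pt = (\<lambda>i. p i + a * g * q i)"
  define \<nu> where "\<nu> = vnorm d pt"
  have ip_pt: "ip d pt y = ip d p y + a * g * ip d q y" for y
    unfolding pt_def by (simp add: ip_add_left ip_scale_left)
  have \<nu>_sq: "\<nu>\<^sup>2 = 1 + (2*a + a\<^sup>2)*g\<^sup>2"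
    unfolding \<nu>_def vnorm_power2 pt_def g_def by (rule ip_self_step[OF p q])
  have "0 \<le> (2*a + a\<^sup>2)*g\<^sup>2" using a by simp
  then have "\<nu> \<noteq> 0" using \<nu>_sq by auto
  then have \<nu>_pos: "0 < \<nu>" using vnorm_nonneg[of d pt] unfolding \<nu>_def by simp
  have ip_p': "ip d p' y = (ip d p y + a * g * ip d q y) / \<nu>" for y
    unfolding p'_def g_def[symmetric] pt_def[symmetric] \<nu>_def[symmetric] ip_divide_left ip_pt ..
  show "ip d p' p' = 1"
  proof -
    have "ip d p' p' = ip d pt p' / \<nu>"
      unfolding p'_def g_def[symmetric] pt_def[symmetric] \<nu>_def[symmetric] ip_divide_left ..
    also have "ip d pt p' = ip d pt pt / \<nu>"
      unfolding p'_def g_def[symmetric] pt_def[symmetric] \<nu>_def[symmetric] ip_divide_right ..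
    also have "ip d pt pt = \<nu>\<^sup>2" unfolding \<nu>_def vnorm_power2 ..
    finally show ?thesis using \<nu>_pos by (simp add: power2_eq_square)
  qed
  have cg: "0 < c + a*g*h" using pv a pq qv unfolding c_def g_def h_def by (simp add: add_pos_nonneg)
  show "0 < ip d p' v" using ip_p'[of v] cg \<nu>_pos unfolding c_def h_def by simp
  show "0 \<le> ip d p' y" if "0 \<le> ip d p y" "0 \<le> ip d q y" for y
    using ip_p'[of y] that a pq \<nu>_pos unfolding g_def by simp
  have "tan_sq d v p' = (1 - ((c + a*g*h)/\<nu>)\<^sup>2) / ((c + a*g*h)/\<nu>)\<^sup>2"
    unfolding tan_sq_def ip_p' c_def h_def ..
  also have "\<dots> = tan_sq_step a h ((g - c*h)/c) ((1 - c\<^sup>2)/c\<^sup>2)"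
    using pv \<nu>_pos \<nu>_sq cg unfolding c_def by (intro tan_sq_step_normalized) auto
  finally show "tan_sq d v p' = tan_sq_step a (ip d q v) ((ip d p q - ip d p v * ip d q v) / ip d p v) (tan_sq d v p)"
    unfolding tan_sq_def c_def g_def h_def .
qed

lemma ip_perp_Cauchy_Schwarz:
  assumes "ip d p p = 1" and "ip d q q = 1" and "ip d v v = 1"
  shows "(ip d p q - ip d p v * ip d q v)\<^sup>2 \<le> (1 - (ip d q v)\<^sup>2) * (1 - (ip d p v)\<^sup>2)"
proof -
  define x where "x = (\<lambda>i. q i - ip d q v * v i)"
  define z where "z = (\<lambda>i. p i - ip d p v * v i)"
  have "ip d x z = ip d p q - ip d p v * ip d q v"
    unfolding x_def z_def ip_linear using assms(3) by (simp add: ip_commute algebra_simps)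
  moreover have "ip d x x = 1 - (ip d q v)\<^sup>2"
    unfolding x_def ip_linear using assms(2,3) by (simp add: ip_commute algebra_simps power2_eq_square)
  moreover have "ip d z z = 1 - (ip d p v)\<^sup>2"
    unfolding z_def ip_linear using assms(1,3) by (simp add: ip_commute algebra_simps power2_eq_square)
  ultimately show ?thesis using ip_Cauchy_Schwarz[of d x z] by simp
qed

lemma pref_Suc: "pref d q p0 \<eta> s w (Suc t) =
   (\<lambda>i. (pref d q p0 \<eta> s w t i + (real \<eta> / (real t + real s)) * ip d (pref d q p0 \<eta> s w t) (q (w t)) * q (w t) i)
      / vnorm d (\<lambda>i. pref d q p0 \<eta> s w t i
          + (real \<eta> / (real t + real s)) * ip d (pref d q p0 \<eta> s w t) (q (w t)) * q (w t) i))"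
  by (simp add: Let_def)

lemma pref_cong: "(\<And>k. k < t \<Longrightarrow> w k = w' k) \<Longrightarrow> pref d q p0 \<eta> s w t = pref d q p0 \<eta> s w' t"
  by (induction t) (auto simp: Let_def)

lemma regret_cong:
  "(\<And>t. t < T \<Longrightarrow> \<omega> t = \<omega>' t) \<Longrightarrow> regret d q p0 \<eta> s \<omega> T = regret d q p0 \<eta> s \<omega>' T"
  unfolding regret_def by (intro sum.cong refl arg_cong[where f = "\<lambda>x. 1 - ip d x p0"] pref_cong) auto

lemma sum_inverse_shift_le_ln:
  fixes s :: real
  assumes "0 < s"
  shows "(\<Sum>k<T. 1 / (real k + s + 1)) \<le> ln ((real T + s) / s)"
proof (induction T)
  case 0
  then show ?case by simp
next
  case (Suc T)
  have pos: "0 < real T + s" using assms by simp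
  have "ln ((real T + s) / (real T + s + 1)) \<le> (real T + s) / (real T + s + 1) - 1"
    using pos by (intro ln_le_minus_one) simp
  also have "\<dots> = - (1 / (real T + s + 1))" using pos by (simp add: field_simps)
  finally have "1 / (real T + s + 1) \<le> ln ((real T + s + 1) / (real T + s))"
    using pos by (simp add: ln_div)
  then have "(\<Sum>k<Suc T. 1 / (real k + s + 1)) \<le> ln ((real T + s) / s) + ln ((real T + s + 1) / (real T + s))"
    using Suc.IH by simp
  also have "\<dots> = ln ((real (Suc T) + s) / s)"
    using pos assms by (simp add: ln_div add_ac)
  finally show ?case .
qed

lemma sum_inverse_le:
  fixes s :: real
  assumes "0 < s"
  shows "(\<Sum>k<T. 1 / (real k + s)) \<le> 1 / s + ln ((real T + s) / s)"
proof (cases T)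
  case 0
  then show ?thesis using assms by simp
next
  case (Suc m)
  have "(\<Sum>k<T. 1 / (real k + s)) = 1 / s + (\<Sum>k<m. 1 / (real k + s + 1))"
    unfolding Suc sum.lessThan_Suc_shift by (simp add: add_ac)
  also have "\<dots> \<le> 1 / s + ln ((real m + s) / s)" using sum_inverse_shift_le_ln[OF assms, of m] by simp
  also have "\<dots> \<le> 1 / s + ln ((real T + s) / s)"
    using assms Suc by (simp add: divide_right_mono)
  finally show ?thesis .
qed

locale oja_dynamics =
  fixes d N :: nat and q :: "nat \<Rightarrow> nat \<Rightarrow> real" and \<alpha> :: "nat \<Rightarrow> real"
    and lam :: "nat \<Rightarrow> real" and v1 p0 :: "nat \<Rightarrow> real" and \<eta> s :: nat
  assumes q_sphere: "\<forall>i<N. q i \<in> sphere_d d"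
    and \<alpha>_nonneg: "\<forall>i<N. 0 \<le> \<alpha> i" and sum_\<alpha>: "(\<Sum>i<N. \<alpha> i) = 1"
    and p0_sphere: "p0 \<in> sphere_d d"
    and eigenvalues: "sorted_eigenvalues d (covm N \<alpha> q) lam"
    and v1_sphere: "v1 \<in> sphere_d d" and v1_eigen: "mulv d (covm N \<alpha> q) v1 = (\<lambda>i. lam 0 * v1 i)"
    and gap: "lam 1 < lam 0" and \<eta>_gap: "8 / (lam 0 - lam 1) \<le> real \<eta>"
    and cos_p0: "sqrt 2 / 2 \<le> ip d v1 p0"
    and aligned_v1: "self_aligned d q {i. i < N \<and> 0 < \<alpha> i} v1"
    and aligned_p0: "self_aligned d q {i. i < N \<and> 0 < \<alpha> i} p0"
    and \<eta>_ge_1: "1 \<le> \<eta>" and s_large: "1000 * real \<eta> \<le> real s"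
begin

definition support :: "nat set" where
  "support = {i. i < N \<and> 0 < \<alpha> i}"

abbreviation P :: "(nat \<Rightarrow> nat) \<Rightarrow> nat \<Rightarrow> nat \<Rightarrow> real" where
  "P w t \<equiv> pref d q p0 \<eta> s w t"

lemma s_pos: "0 < s"
  using s_large \<eta>_ge_1 by simp

lemma finite_support: "finite support"
  unfolding support_def by simp

lemma sum_over_support: "(\<Sum>k<N. \<alpha> k * f k) = (\<Sum>k\<in>support. \<alpha> k * f k)"
  by (rule sum.mono_neutral_right) (use \<alpha>_nonneg in \<open>auto simp: support_def less_le\<close>)

lemma sum_\<alpha>_support: "sum \<alpha> support = 1"
  using sum_over_support[of "\<lambda>_. 1"] sum_\<alpha> by simp

lemma support_nonneg: "i \<in> support \<Longrightarrow> 0 \<le> \<alpha> i"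
  unfolding support_def by simp

lemma v1_unit: "ip d v1 v1 = 1"
  using ip_self_sphere[OF v1_sphere] .

lemma q_unit: "i \<in> support \<Longrightarrow> ip d (q i) (q i) = 1"
  using ip_self_sphere q_sphere by (auto simp: support_def)

lemma q_v1_nonneg: "i \<in> support \<Longrightarrow> 0 \<le> ip d (q i) v1"
  using aligned_v1 by (auto simp: self_aligned_def support_def)

lemma q_q_nonneg: "i \<in> support \<Longrightarrow> j \<in> support \<Longrightarrow> 0 \<le> ip d (q i) (q j)"
  using aligned_v1 by (auto simp: self_aligned_def support_def)

lemma p0_q_nonneg: "i \<in> support \<Longrightarrow> 0 \<le> ip d p0 (q i)"
  using aligned_p0 by (auto simp: self_aligned_def support_def ip_commute)

lemma pref_invariant:
  assumes "\<And>k. k < t \<Longrightarrow> w k \<in> support"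
  shows "ip d (P w t) (P w t) = 1 \<and> 0 < ip d (P w t) v1 \<and> (\<forall>i\<in>support. 0 \<le> ip d (P w t) (q i))"
  using assms
proof (induction t)
  case 0
  have "0 < sqrt 2 / 2" by simp
  then have "0 < ip d p0 v1" using cos_p0 ip_commute[of d v1 p0] by linarith
  then show ?case using ip_self_sphere[OF p0_sphere] p0_q_nonneg by simp
next
  case (Suc t)
  then have IH: "ip d (P w t) (P w t) = 1" "0 < ip d (P w t) v1" "\<forall>i\<in>support. 0 \<le> ip d (P w t) (q i)"
    by auto
  have wt: "w t \<in> support" using Suc.prems by simp
  note step = oja_step[OF IH(1) q_unit[OF wt] _ IH(3)[rule_format, OF wt] q_v1_nonneg[OF wt] IH(2),
      of "real \<eta> / (real t + real s)", folded pref_Suc]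
  have "0 \<le> ip d (P w (Suc t)) (q i)" if "i \<in> support" for i
    using step(3) IH(3) that q_q_nonneg[OF wt that] by simp
  then show ?case using step(1,2) by simp
qed

lemma mean_cos_sq: "(\<Sum>i\<in>support. \<alpha> i * (ip d (q i) v1)\<^sup>2) = lam 0"
proof -
  have "(\<Sum>i\<in>support. \<alpha> i * (ip d (q i) v1)\<^sup>2) = ip d v1 (mulv d (covm N \<alpha> q) v1)"
    unfolding ip_mulv_covm sum_over_support[symmetric] by (simp add: power2_eq_square mult.assoc)
  also have "\<dots> = lam 0" unfolding v1_eigen ip_scale_right v1_unit by simp
  finally show ?thesis .
qed

lemma mean_cos_cross: "(\<Sum>i\<in>support. \<alpha> i * (ip d (q i) v1 * ip d p (q i))) = lam 0 * ip d p v1"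
proof -
  have "(\<Sum>i\<in>support. \<alpha> i * (ip d (q i) v1 * ip d p (q i))) = ip d p (mulv d (covm N \<alpha> q) v1)"
    unfolding ip_mulv_covm sum_over_support[symmetric] by (simp add: ip_commute mult_ac)
  also have "\<dots> = lam 0 * ip d p v1" unfolding v1_eigen ip_scale_right ..
  finally show ?thesis .
qed

text \<open>The component of \<open>p\<close> orthogonal to \<open>v1\<close> only sees the spectrum below \<open>lam 1\<close>.\<close>
lemma mean_perp_sq:
  assumes "ip d p p = 1"
  shows "(\<Sum>i\<in>support. \<alpha> i * (ip d p (q i) - ip d p v1 * ip d (q i) v1)\<^sup>2) \<le> lam 1 * (1 - (ip d p v1)\<^sup>2)"
proof -
  define c where "c = ip d p v1"
  define z where "z = (\<lambda>i. p i - c * v1 i)"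
  have z_q: "ip d (q k) z = ip d p (q k) - c * ip d (q k) v1" for k
    unfolding z_def ip_linear by (simp add: ip_commute)
  have z_v1: "ip d z v1 = 0" unfolding z_def ip_linear v1_unit c_def by simp
  have z_z: "ip d z z = 1 - c\<^sup>2"
    unfolding z_def ip_linear using v1_unit assms unfolding c_def
    by (simp add: ip_commute power2_eq_square algebra_simps)
  have "(\<Sum>i\<in>support. \<alpha> i * (ip d p (q i) - c * ip d (q i) v1)\<^sup>2) = ip d z (mulv d (covm N \<alpha> q) z)"
    unfolding ip_mulv_covm sum_over_support[symmetric] z_q by (simp add: power2_eq_square mult.assoc)
  also have "\<dots> \<le> lam 1 * ip d z z"
    by (rule quadratic_form_le_second_eigenvalue[OF eigenvalues covm_symmetric v1_unit v1_eigen gap z_v1])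
  finally show ?thesis unfolding z_z c_def .
qed

lemma mean_cos_mult_perp:
  assumes c: "0 < ip d p v1"
  shows "(\<Sum>i\<in>support. \<alpha> i
    * (ip d (q i) v1 * ((ip d p (q i) - ip d p v1 * ip d (q i) v1) / ip d p v1))) = 0"
proof -
  define c h where "c = ip d p v1" and "h i = ip d (q i) v1" for i
  have "(\<Sum>i\<in>support. \<alpha> i * (h i * ((ip d p (q i) - c * h i) / c)))
      = (\<Sum>i\<in>support. (\<alpha> i * (h i * ip d p (q i)) - c * (\<alpha> i * (h i)\<^sup>2)) / c)"
    using c unfolding c_def by (intro sum.cong refl) (simp add: field_simps power2_eq_square)
  also have "\<dots> = ((\<Sum>i\<in>support. \<alpha> i * (h i * ip d p (q i))) - c * (\<Sum>i\<in>support. \<alpha> i * (h i)\<^sup>2)) / c"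
    by (simp add: sum_divide_distrib[symmetric] sum_subtractf sum_distrib_left)
  finally show ?thesis using mean_cos_cross[of p] mean_cos_sq c unfolding h_def c_def by simp
qed

lemma mean_perp_ratio_sq:
  assumes p: "ip d p p = 1" and c: "0 < ip d p v1"
  shows "(\<Sum>i\<in>support. \<alpha> i * ((ip d p (q i) - ip d p v1 * ip d (q i) v1) / ip d p v1)\<^sup>2)
    \<le> lam 1 * tan_sq d v1 p"
proof -
  have "(\<Sum>i\<in>support. \<alpha> i * ((ip d p (q i) - ip d p v1 * ip d (q i) v1) / ip d p v1)\<^sup>2)
      = (\<Sum>i\<in>support. \<alpha> i * (ip d p (q i) - ip d p v1 * ip d (q i) v1)\<^sup>2) / (ip d p v1)\<^sup>2"
    by (simp add: sum_divide_distrib power_divide)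
  also have "\<dots> \<le> lam 1 * (1 - (ip d p v1)\<^sup>2) / (ip d p v1)\<^sup>2"
    using mean_perp_sq[OF p] by (intro divide_right_mono) simp_all
  finally show ?thesis unfolding tan_sq_def by simp
qed

lemma step_region:
  assumes p: "ip d p p = 1" and c_pos: "0 < ip d p v1" and g: "0 \<le> ip d p (q i)" and i: "i \<in> support"
    and \<tau>: "tan_sq d v1 p \<le> 2" and a: "0 \<le> a" "a \<le> 1/1000"
  shows "tan_sq_step_region a (ip d (q i) v1)
    ((ip d p (q i) - ip d p v1 * ip d (q i) v1) / ip d p v1) (tan_sq d v1 p)"
proof -
  define c h g where "c = ip d p v1" and "h = ip d (q i) v1" and "g = ip d p (q i)"
  have c: "0 < c" "c \<le> 1" using c_pos abs_ip_le_1[OF p v1_unit] unfolding c_def by auto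
  have \<tau>_eq: "tan_sq d v1 p = (1 - c\<^sup>2)/c\<^sup>2" unfolding tan_sq_def c_def ..
  have "(g - c*h)\<^sup>2 \<le> (1 - h\<^sup>2) * (1 - c\<^sup>2)"
    using ip_perp_Cauchy_Schwarz[OF p q_unit[OF i] v1_unit] unfolding g_def c_def h_def .
  then have "(g - c*h)\<^sup>2 / c\<^sup>2 \<le> (1 - h\<^sup>2) * (1 - c\<^sup>2) / c\<^sup>2" by (intro divide_right_mono) simp_all
  then have "((g - c*h)/c)\<^sup>2 \<le> (1 - h\<^sup>2) * tan_sq d v1 p" unfolding \<tau>_eq by (simp add: power_divide)
  moreover have "h + (g - c*h)/c = g/c" using c by (simp add: field_simps)
  then have "0 \<le> h + (g - c*h)/c" using c g unfolding g_def by simp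
  moreover have "0 \<le> h" "h \<le> 1" using q_v1_nonneg[OF i] abs_ip_le_1[OF q_unit[OF i] v1_unit]
    unfolding h_def by auto
  moreover have "0 \<le> tan_sq d v1 p" using tan_sq_nonneg c unfolding c_def by blast
  ultimately show ?thesis using a \<tau> unfolding c_def h_def g_def by unfold_locales auto
qed

lemma step_distribution:
  assumes p: "ip d p p = 1" and c: "0 < ip d p v1" and g: "\<forall>i\<in>support. 0 \<le> ip d p (q i)"
    and \<tau>: "tan_sq d v1 p \<le> 2" and n: "1 \<le> n" and small: "real \<eta> / n \<le> 1/1000"
  shows "tan_sq_step_distribution support \<alpha> (\<lambda>i. ip d (q i) v1)
    (\<lambda>i. (ip d p (q i) - ip d p v1 * ip d (q i) v1) / ip d p v1) (tan_sq d v1 p) (lam 0) (lam 1) (real \<eta>) n"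
proof (rule tan_sq_step_distribution.intro)
  show "tan_sq_step_region (real \<eta> / n) (ip d (q i) v1)
      ((ip d p (q i) - ip d p v1 * ip d (q i) v1) / ip d p v1) (tan_sq d v1 p)" if "i \<in> support" for i
    using step_region[OF p c g[rule_format, OF that] that \<tau> _ small] n by simp
  show "8 \<le> real \<eta> * (lam 0 - lam 1)" using \<eta>_gap gap by (simp add: divide_le_eq)
qed (use support_nonneg sum_\<alpha>_support \<eta>_ge_1 n mean_cos_sq mean_cos_mult_perp[OF c]
    mean_perp_ratio_sq[OF p c] in auto)

lemma exp_moment_step:
  assumes w: "\<And>k. k < t \<Longrightarrow> w k \<in> support" and \<tau>: "tan_sq d v1 (P w t) \<le> 2"
  shows "(\<Sum>i\<in>support. \<alpha> i * exp ((real t + real s + 1) * tan_sq d v1 (P (w(t := i)) (Suc t))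
      / (300 * (real \<eta>)\<^sup>2)))
    \<le> exp ((real t + real s) * tan_sq d v1 (P w t) / (300 * (real \<eta>)\<^sup>2) + 2 / (real t + real s))"
proof -
  define p where "p = P w t"
  have inv: "ip d p p = 1" "0 < ip d p v1" "\<forall>i\<in>support. 0 \<le> ip d p (q i)"
    using pref_invariant[OF w] unfolding p_def by auto
  have n: "1 \<le> real t + real s" using s_pos by simp
  have "real \<eta> / (real t + real s) \<le> real \<eta> / real s" using s_pos by (intro divide_left_mono) auto
  moreover have "real \<eta> / real s \<le> 1/1000" using s_large s_pos by (simp add: divide_le_eq)
  ultimately have small: "real \<eta> / (real t + real s) \<le> 1/1000" by linarith
  interpret tan_sq_step_distribution support \<alpha> "\<lambda>i. ip d (q i) v1"
    "\<lambda>i. (ip d p (q i) - ip d p v1 * ip d (q i) v1) / ip d p v1" "tan_sq d v1 p" "lam 0" "lam 1"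
    "real \<eta>" "real t + real s"
    using step_distribution[OF inv \<tau>[folded p_def] n small] .
  have "tan_sq d v1 (P (w(t := i)) (Suc t)) = tan_sq_step (real \<eta> / (real t + real s)) (ip d (q i) v1)
      ((ip d p (q i) - ip d p v1 * ip d (q i) v1) / ip d p v1) (tan_sq d v1 p)" if i: "i \<in> support" for i
  proof -
    have "P (w(t := i)) t = p" unfolding p_def by (rule pref_cong) simp
    then show ?thesis
      using oja_step(4)[OF inv(1) q_unit[OF i] _ inv(3)[rule_format, OF i] q_v1_nonneg[OF i] inv(2),
          of "real \<eta> / (real t + real s)"]
      by (simp add: Let_def)
  qed
  then have "(\<Sum>i\<in>support. \<alpha> i * exp ((real t + real s + 1) * tan_sq d v1 (P (w(t := i)) (Suc t))
      / (300 * (real \<eta>)\<^sup>2)))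
    = (\<Sum>i\<in>support. \<alpha> i * exp ((real t + real s + 1) * tan_sq_step (real \<eta> / (real t + real s))
      (ip d (q i) v1) ((ip d p (q i) - ip d p v1 * ip d (q i) v1) / ip d p v1) (tan_sq d v1 p)
      / (300 * (real \<eta>)\<^sup>2)))"
    by (intro sum.cong) simp_all
  also have "\<dots> \<le> exp ((real t + real s) * tan_sq d v1 p / (300 * (real \<eta>)\<^sup>2) + 2 / (real t + real s))"
    by (rule mean_exp_le)
  finally show ?thesis unfolding p_def .
qed

definition scaled_tan_sq :: "(nat \<Rightarrow> nat) \<Rightarrow> nat \<Rightarrow> real" where
  "scaled_tan_sq w t = (real t + real s) * tan_sq d v1 (P w t)"

sublocale stopped: stopped_exp_supermartingale support \<alpha> scaled_tan_sq "2 * real s"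
  "300 * (real \<eta>)\<^sup>2" "real s" "\<lambda>n. 2 / (real n + real s)"
proof
  show "scaled_tan_sq w t = scaled_tan_sq w' t" if "\<And>k. k < t \<Longrightarrow> w k = w' k" for w w' t
    unfolding scaled_tan_sq_def using pref_cong[OF that] by simp
  show "scaled_tan_sq w 0 \<le> real s" for w
    using tan_sq_le_1[of d p0 v1] cos_p0 ip_commute[of d v1 p0]
    unfolding scaled_tan_sq_def by (simp add: mult_left_le)
  show "(\<Sum>i\<in>support. \<alpha> i * exp (scaled_tan_sq (w(n := i)) (Suc n) / (300 * (real \<eta>)\<^sup>2)))
      \<le> exp (scaled_tan_sq w n / (300 * (real \<eta>)\<^sup>2) + 2 / (real n + real s))"
    if w: "w \<in> paths support n" and below: "scaled_tan_sq w n \<le> 2 * real s" for w n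
  proof -
    have "(real n + real s) * tan_sq d v1 (P w n) \<le> (real n + real s) * 2"
      using below unfolding scaled_tan_sq_def by simp
    then have "tan_sq d v1 (P w n) \<le> 2" by (rule mult_left_le_imp_le) (use s_pos in simp)
    then show ?thesis
      using exp_moment_step[of n w] paths_memD[OF w] unfolding scaled_tan_sq_def by (simp add: add_ac)
  qed
qed (use finite_support support_nonneg sum_\<alpha>_support \<eta>_ge_1 in auto)

lemma one_minus_ip_p0_le:
  assumes w: "\<And>k. k < t \<Longrightarrow> w k \<in> support" and below: "scaled_tan_sq w t \<le> 2 * real s"
  shows "1 - ip d (P w t) p0 \<le> 2 * real s / (real t + real s) + vnorm d (\<lambda>i. v1 i - p0 i)"
proof -
  define p where "p = P w t"
  have inv: "ip d p p = 1" "0 < ip d p v1" using pref_invariant[OF w] unfolding p_def by auto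
  have "1 - ip d p v1 \<le> tan_sq d v1 p"
    using one_minus_cos_le_tan_sq inv(2) abs_ip_le_1[OF inv(1) v1_unit] by simp
  also have "\<dots> \<le> 2 * real s / (real t + real s)"
    using below s_pos unfolding scaled_tan_sq_def p_def by (simp add: le_divide_eq mult.commute)
  finally have "1 - ip d p v1 \<le> 2 * real s / (real t + real s)" .
  moreover have "ip d p p0 = ip d p v1 - ip d p (\<lambda>i. v1 i - p0 i)" by (simp add: ip_diff_right)
  moreover have "\<bar>ip d p (\<lambda>i. v1 i - p0 i)\<bar> \<le> vnorm d (\<lambda>i. v1 i - p0 i)" by (rule abs_ip_le_vnorm[OF inv(1)])
  ultimately show ?thesis unfolding p_def by linarith
qed

lemma regret_le_if_stays_below:
  assumes w: "w \<in> paths support T" and below: "stopped.stays_below T w"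
  shows "regret d q p0 \<eta> s w T \<le> 4 * exp 2 * (real s + 2) * (1 + ln ((real T + real s) / real s))
    + real T * vnorm d (\<lambda>i. v1 i - p0 i)"
proof -
  define l where "l = ln ((real T + real s) / real s)"
  have l_nonneg: "0 \<le> l" unfolding l_def using s_pos by simp
  have "regret d q p0 \<eta> s w T
      \<le> (\<Sum>t<T. 2 * real s / (real t + real s) + vnorm d (\<lambda>i. v1 i - p0 i))"
    unfolding regret_def using one_minus_ip_p0_le paths_memD[OF w] below
    by (intro sum_mono) (auto simp: stopped.stays_below_def)
  also have "\<dots> = 2 * real s * (\<Sum>t<T. 1 / (real t + real s)) + real T * vnorm d (\<lambda>i. v1 i - p0 i)"
    by (simp add: sum.distrib sum_distrib_left)
  also have "\<dots> \<le> 2 * real s * (1 / real s + l) + real T * vnorm d (\<lambda>i. v1 i - p0 i)"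
    using sum_inverse_le[of "real s" T] s_pos unfolding l_def by (intro add_mono mult_left_mono) auto
  also have "2 * real s * (1 / real s + l) = 2 + 2 * real s * l" using s_pos by (simp add: field_simps)
  also have "\<dots> \<le> 4 * exp 2 * (real s + 2) * (1 + l)"
  proof -
    have "2 + 2 * real s * l \<le> 4 * 1 * (real s + 2) * (1 + l)" using l_nonneg by (simp add: algebra_simps)
    also have "\<dots> \<le> 4 * exp 2 * (real s + 2) * (1 + l)" using l_nonneg by (intro mult_right_mono) auto
    finally show ?thesis .
  qed
  finally show ?thesis unfolding l_def by simp
qed

theorem regret_bound_probability:
  fixes D :: "nat pmf"
  assumes D: "\<forall>i<N. pmf D i = \<alpha> i"
  shows "1 - real T * exp (- real s / (300 * (real \<eta>)\<^sup>2) + (\<Sum>k<T. 2 / (real k + real s)))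
    \<le> measure (PiM UNIV (\<lambda>_::nat. measure_pmf D))
        {\<omega> \<in> space (PiM UNIV (\<lambda>_::nat. measure_pmf D)).
           regret d q p0 \<eta> s \<omega> T
             \<le> 4 * exp 2 * (real s + 2) * (1 + ln ((real T + real s) / real s))
                + real T * vnorm d (\<lambda>i. v1 i - p0 i)}"
    (is "_ \<le> measure ?M {\<omega> \<in> space ?M. regret d q p0 \<eta> s \<omega> T \<le> ?R}")
proof -
  let ?G = "{w \<in> paths support T. stopped.stays_below T w}"
  have "1 - real T * exp (- real s / (300 * (real \<eta>)\<^sup>2) + (\<Sum>k<T. 2 / (real k + real s)))
      \<le> (\<Sum>w\<in>?G. path_weight \<alpha> T w)"
    using stopped.mass_stays_below_ge[of T] by simp
  also have "\<dots> = (\<Sum>w\<in>?G. \<Prod>t<T. pmf D (w t))"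
  proof (rule sum.cong[OF refl])
    fix w assume "w \<in> ?G"
    then have "w t \<in> support" if "t < T" for t using paths_memD that by auto
    then show "path_weight \<alpha> T w = (\<Prod>t<T. pmf D (w t))"
      unfolding path_weight_def using D by (intro prod.cong refl) (simp add: support_def)
  qed
  also have "\<dots> \<le> measure ?M {\<omega> \<in> space ?M. regret d q p0 \<eta> s \<omega> T \<le> ?R}"
  proof (rule measure_prefix_event_ge)
    show "(regret d q p0 \<eta> s \<omega> T \<le> ?R) \<longleftrightarrow> (regret d q p0 \<eta> s \<omega>' T \<le> ?R)"
      if "\<forall>t<T. \<omega> t = \<omega>' t" for \<omega> \<omega>'
      using regret_cong[of T \<omega> \<omega>'] that by simp
    show "?G \<subseteq> paths UNIV T" unfolding paths_def by (auto simp: PiE_def)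
  qed (use finite_paths[OF finite_support] regret_le_if_stays_below in auto)
  finally show ?thesis .
qed

end

section \<open>The sample-size condition\<close>

lemma mulv_diff: "mulv d (\<lambda>a b. A a b - B a b) x = (\<lambda>i. mulv d A x i - mulv d B x i)"
  unfolding mulv_def by (auto simp: algebra_simps sum_subtractf)

lemma vnorm_mulv_le_frobenius:
  assumes "ip d x x \<le> 1"
  shows "vnorm d (mulv d B x) \<le> sqrt (\<Sum>i<d. \<Sum>j<d. (B i j)\<^sup>2)"
proof -
  have "ip d (mulv d B x) (mulv d B x) = (\<Sum>i<d. (\<Sum>j<d. B i j * x j)\<^sup>2)"
    unfolding ip_def mulv_def by (simp add: power2_eq_square)
  also have "\<dots> \<le> (\<Sum>i<d. (\<Sum>j<d. (B i j)\<^sup>2) * (\<Sum>j<d. (x j)\<^sup>2))"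
    by (intro sum_mono Cauchy_Schwarz_ineq_sum)
  also have "\<dots> \<le> (\<Sum>i<d. (\<Sum>j<d. (B i j)\<^sup>2) * 1)"
  proof (intro sum_mono mult_left_mono)
    show "(\<Sum>j<d. (x j)\<^sup>2) \<le> 1" using assms unfolding ip_def by (simp add: power2_eq_square)
  qed (auto intro: sum_nonneg)
  finally show ?thesis unfolding vnorm_def by simp
qed

lemma vnorm_mulv_le_opnorm:
  assumes x: "x \<in> vecs d" and x_le: "ip d x x \<le> 1"
  shows "vnorm d (mulv d B x) \<le> opnorm d B"
proof -
  have bdd: "bdd_above {vnorm d (mulv d B x) | x. x \<in> vecs d \<and> vnorm d x \<le> 1}"
  proof (rule bdd_aboveI)
    fix y assume "y \<in> {vnorm d (mulv d B x) | x. x \<in> vecs d \<and> vnorm d x \<le> 1}"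
    then obtain z where z: "y = vnorm d (mulv d B z)" "vnorm d z \<le> 1" by blast
    have "(vnorm d z)\<^sup>2 \<le> 1" using z(2) vnorm_nonneg[of d z] by (simp add: power_le_one)
    then show "y \<le> sqrt (\<Sum>i<d. \<Sum>j<d. (B i j)\<^sup>2)"
      using vnorm_mulv_le_frobenius z(1) by (simp add: vnorm_power2)
  qed
  have "vnorm d x \<le> 1" using x_le unfolding vnorm_def by simp
  then have "vnorm d (mulv d B x) \<in> {vnorm d (mulv d B x) | x. x \<in> vecs d \<and> vnorm d x \<le> 1}"
    using x by blast
  then show ?thesis unfolding opnorm_def using bdd by (rule cSup_upper)
qed

text \<open>The constant \<open>M\<close> of the sample-size condition is never below \<open>1/2\<close>: for a unit vector \<open>q\<close>,
  \<open>q\<^sup>T (q q\<^sup>T - \<Sigma>) q \<ge> 1 - \<lambda>\<^sub>1\<close>.\<close>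
lemma half_le_deviation_max:
  assumes N: "1 \<le> N" and q_sphere: "\<forall>i<N. q i \<in> sphere_d d"
    and eigenvalues: "sorted_eigenvalues d (covm N \<alpha> q) lam"
  shows "1/2 \<le> max (Max ((\<lambda>j. opnorm d (\<lambda>a b. outer (q j) (q j) a b - covm N \<alpha> q a b)) ` {..<N}))
    (lam 0)"
proof -
  define B where "B = (\<lambda>a b. outer (q 0) (q 0) a b - covm N \<alpha> q a b)"
  have q0: "q 0 \<in> vecs d" "ip d (q 0) (q 0) = 1"
    using q_sphere N ip_self_sphere unfolding sphere_d_def by auto
  have outer: "ip d (q 0) (mulv d (outer (q 0) (q 0)) (q 0)) = 1"
  proof -
    have "ip d (q 0) (mulv d (outer (q 0) (q 0)) (q 0)) = (\<Sum>i<d. q 0 i * (q 0 i * ip d (q 0) (q 0)))"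
      unfolding ip_def mulv_def outer_def by (simp add: sum_distrib_left mult_ac)
    also have "\<dots> = ip d (q 0) (q 0) * ip d (q 0) (q 0)"
      unfolding ip_def[of d "q 0" "q 0"] by (simp add: sum_distrib_right mult_ac)
    finally show ?thesis using q0(2) by simp
  qed
  have "1 - lam 0 \<le> ip d (q 0) (mulv d B (q 0))"
    using quadratic_form_le_top_eigenvalue[OF eigenvalues covm_symmetric, of "q 0"] q0(2)
    unfolding B_def mulv_diff ip_diff_right outer by simp
  also have "\<dots> \<le> vnorm d (mulv d B (q 0))" using abs_ip_le_vnorm[OF q0(2), of "mulv d B (q 0)"] by linarith
  also have "\<dots> \<le> opnorm d B" using q0 by (intro vnorm_mulv_le_opnorm) simp_all
  also have "\<dots> \<le> Max ((\<lambda>j. opnorm d (\<lambda>a b. outer (q j) (q j) a b - covm N \<alpha> q a b)) ` {..<N})"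
    unfolding B_def using N by (intro Max_ge) auto
  finally show ?thesis by linarith
qed

lemma sum_step_sizes_le:
  assumes s: "1 \<le> s" and T: "1 \<le> T"
  shows "(\<Sum>k<T. 2 / (real k + real s)) \<le> 4 + 2 * ln (real T)"
proof -
  have "(real T + real s) / real s \<le> 2 * real T"
  proof -
    have "(real T + real s) / real s = real T / real s + 1" using s by (simp add: field_simps)
    also have "\<dots> \<le> real T + 1" using s by (simp add: divide_le_eq mult_le_cancel_left1)
    finally show ?thesis using T by simp
  qed
  then have "ln ((real T + real s) / real s) \<le> ln (2 * real T)" using s T by simp
  also have "\<dots> = ln 2 + ln (real T)" using T by (simp add: ln_mult)
  finally have "ln ((real T + real s) / real s) \<le> 1 + ln (real T)" using ln_2_less_1 by linarith
  moreover have "1 / real s \<le> 1" using s by simp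
  moreover have "(\<Sum>k<T. 2 / (real k + real s)) = 2 * (\<Sum>k<T. 1 / (real k + real s))"
    by (simp add: sum_distrib_left)
  moreover have "(\<Sum>k<T. 1 / (real k + real s)) \<le> 1 / real s + ln ((real T + real s) / real s)"
    using s by (intro sum_inverse_le) simp
  ultimately show ?thesis by linarith
qed

lemma log_confidence_ge:
  fixes M \<eta> \<delta> :: real
  assumes M: "1/2 \<le> M" and \<eta>: "1 \<le> \<eta>" and T: "1 \<le> T" and \<delta>: "0 < \<delta>"
  shows "1 + ln (real T) - ln \<delta> \<le> ln (2 * 170 * M * real T * \<eta> / \<delta>)"
proof -
  define A where "A = 2 * 170 * M * \<eta>"
  have "1 * 1 \<le> (2 * M) * \<eta>" using M \<eta> by (intro mult_mono) auto
  then have A: "170 \<le> A" unfolding A_def by simp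
  have "exp 1 \<le> A" using exp_le A by simp
  then have "1 \<le> ln A" using A by (simp add: ln_ge_iff)
  moreover have "ln (2 * 170 * M * real T * \<eta> / \<delta>) = ln (A * real T / \<delta>)"
    unfolding A_def by (simp add: mult_ac)
  moreover have "\<dots> = ln (A * real T) - ln \<delta>" using A T \<delta> by (simp add: ln_div)
  moreover have "ln (A * real T) = ln A + ln (real T)" using A T by (simp add: ln_mult)
  ultimately show ?thesis by linarith
qed

lemma sample_size_ge:
  fixes M \<eta> L :: real
  assumes M: "1/2 \<le> M" and L: "0 \<le> L" and s: "1 + 2 * 170\<^sup>2 * \<eta>\<^sup>2 * M\<^sup>2 * L \<le> real s"
  shows "14450 * \<eta>\<^sup>2 * L \<le> real s"
proof -
  define Z where "Z = \<eta>\<^sup>2 * L"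
  have "(1/2)\<^sup>2 \<le> M\<^sup>2" using M by (intro power_mono) auto
  then have "1/4 \<le> M\<^sup>2" by (simp add: power2_eq_square)
  then have "Z * (1/4) \<le> Z * M\<^sup>2" using L unfolding Z_def by (intro mult_left_mono) auto
  moreover have "2 * 170\<^sup>2 * \<eta>\<^sup>2 * M\<^sup>2 * L = 57800 * (Z * M\<^sup>2)" unfolding Z_def by simp
  moreover have "14450 * \<eta>\<^sup>2 * L = 57800 * (Z * (1/4))" unfolding Z_def by simp
  ultimately show ?thesis using s by linarith
qed

lemma sample_size_consequences:
  fixes M \<eta> \<delta> :: real and s T :: nat
  assumes M: "1/2 \<le> M" and \<eta>: "1 \<le> \<eta>" and T: "1 \<le> T" and \<delta>: "0 < \<delta>" "\<delta> < 1"
    and s: "1 + 2 * 170\<^sup>2 * \<eta>\<^sup>2 * M\<^sup>2 * ln (2 * 170 * M * real T * \<eta> / \<delta>) \<le> real s"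
  shows "1000 * \<eta> \<le> real s"
    and "real T * exp (- real s / (300 * \<eta>\<^sup>2) + (\<Sum>k<T. 2 / (real k + real s))) \<le> \<delta>"
proof -
  define L where "L = ln (2 * 170 * M * real T * \<eta> / \<delta>)"
  have L: "1 + ln (real T) - ln \<delta> \<le> L" unfolding L_def by (rule log_confidence_ge[OF M \<eta> T \<delta>(1)])
  have ln_T: "0 \<le> ln (real T)" using T by simp
  have ln_\<delta>: "ln \<delta> < 0" using \<delta> by simp
  have L_ge_1: "1 \<le> L" using L ln_T ln_\<delta> by linarith
  have sL: "14450 * \<eta>\<^sup>2 * L \<le> real s"
    using sample_size_ge[OF M _ s[folded L_def]] L_ge_1 by simp
  have "1000 * \<eta> \<le> 14450 * \<eta>\<^sup>2 * 1" using \<eta> by (simp add: power2_eq_square)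
  also have "\<dots> \<le> 14450 * \<eta>\<^sup>2 * L" using L_ge_1 by (intro mult_left_mono) auto
  finally show "1000 * \<eta> \<le> real s" using sL by linarith
  then have s_ge_1: "1 \<le> s" using \<eta> by simp
  have "48 * L \<le> real s / (300 * \<eta>\<^sup>2)"
  proof -
    have "14450 * \<eta>\<^sup>2 * L / (300 * \<eta>\<^sup>2) \<le> real s / (300 * \<eta>\<^sup>2)"
      using sL \<eta> by (intro divide_right_mono) auto
    moreover have "14450 * \<eta>\<^sup>2 * L / (300 * \<eta>\<^sup>2) = 14450 / 300 * L" using \<eta> by simp
    ultimately show ?thesis using L_ge_1 by linarith
  qed
  then have "ln (real T) + (- real s / (300 * \<eta>\<^sup>2) + (\<Sum>k<T. 2 / (real k + real s))) \<le> ln \<delta>"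
    using sum_step_sizes_le[OF s_ge_1 T] L ln_T ln_\<delta> by linarith
  then have "exp (ln (real T) + (- real s / (300 * \<eta>\<^sup>2) + (\<Sum>k<T. 2 / (real k + real s)))) \<le> \<delta>"
    using \<delta> by (metis exp_le_cancel_iff exp_ln)
  then show "real T * exp (- real s / (300 * \<eta>\<^sup>2) + (\<Sum>k<T. 2 / (real k + real s))) \<le> \<delta>"
    using T by (simp add: exp_add)
qed

theorem oja_regret_bound:
  fixes D :: "nat pmf"
  assumes N: "1 \<le> N" and q_sphere: "\<forall>i<N. q i \<in> sphere_d d"
    and \<alpha>_nonneg: "\<forall>i<N. 0 \<le> \<alpha> i" and sum_\<alpha>: "(\<Sum>i<N. \<alpha> i) = 1" and D: "\<forall>i<N. pmf D i = \<alpha> i"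
    and p0_sphere: "p0 \<in> sphere_d d" and eigenvalues: "sorted_eigenvalues d (covm N \<alpha> q) lam"
    and v1_sphere: "v1 \<in> sphere_d d" and v1_eigen: "mulv d (covm N \<alpha> q) v1 = (\<lambda>i. lam 0 * v1 i)"
    and \<eta>: "1 \<le> \<eta>" and T: "1 \<le> T" and \<delta>: "0 < \<delta>" "\<delta> < 1"
    and cos_p0: "ip d v1 p0 \<ge> sqrt 2 / 2" and gap: "lam 1 < lam 0"
    and \<eta>_gap: "real \<eta> \<ge> 8 / (lam 0 - lam 1)"
    and s: "let M = max (Max ((\<lambda>j. opnorm d (\<lambda>a b. outer (q j) (q j) a b - covm N \<alpha> q a b)) ` {..<N}))
                   (lam 0)
       in real s \<ge> 1 + 2 * (170::real)\<^sup>2 * (real \<eta>)\<^sup>2 * M\<^sup>2 * ln (2 * 170 * M * real T * real \<eta> / \<delta>)"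
    and aligned_v1: "self_aligned d q {i. i < N \<and> 0 < \<alpha> i} v1"
    and aligned_p0: "self_aligned d q {i. i < N \<and> 0 < \<alpha> i} p0"
  shows "measure (PiM UNIV (\<lambda>_::nat. measure_pmf D))
        {\<omega> \<in> space (PiM UNIV (\<lambda>_::nat. measure_pmf D)).
           regret d q p0 \<eta> s \<omega> T
             \<le> 4 * exp 2 * (real s + 2) * (1 + ln ((real T + real s) / real s))
                + real T * vnorm d (\<lambda>i. v1 i - p0 i)}
        \<ge> 1 - \<delta>"
proof -
  define M where "M = max (Max ((\<lambda>j. opnorm d (\<lambda>a b. outer (q j) (q j) a b - covm N \<alpha> q a b)) ` {..<N}))
    (lam 0)"
  have "1/2 \<le> M" unfolding M_def by (rule half_le_deviation_max[OF N q_sphere eigenvalues])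
  then have s_large: "1000 * real \<eta> \<le> real s"
    and failure: "real T * exp (- real s / (300 * (real \<eta>)\<^sup>2) + (\<Sum>k<T. 2 / (real k + real s))) \<le> \<delta>"
    using sample_size_consequences[of M "real \<eta>" T \<delta> s] \<eta> T \<delta> s unfolding M_def Let_def by auto
  interpret oja_dynamics d N q \<alpha> lam v1 p0 \<eta> s
    using q_sphere \<alpha>_nonneg sum_\<alpha> p0_sphere eigenvalues v1_sphere v1_eigen gap \<eta>_gap cos_p0
      aligned_v1 aligned_p0 \<eta> s_large
    by unfold_locales auto
  show ?thesis using regret_bound_probability[OF D, of T] failure by linarith
qed

theorem corollary3:
  "\<exists>C::real. 0 < C \<and> C < 175 \<and>
    (\<forall>(d::nat) (N::nat) (q::nat \<Rightarrow> nat \<Rightarrow> real) (\<alpha>::nat \<Rightarrow> real) (D::nat pmf)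
       (p0::nat \<Rightarrow> real) (lam::nat \<Rightarrow> real) (v1::nat \<Rightarrow> real)
       (\<eta>::nat) (s::nat) (T::nat) (\<delta>::real).
      2 \<le> d \<and> 1 \<le> N \<and>
      (\<forall>i<N. q i \<in> sphere_d d) \<and> inj_on q {..<N} \<and>
      (\<forall>i<N. 0 \<le> \<alpha> i) \<and> (\<Sum>i<N. \<alpha> i) = 1 \<and>
      (\<forall>i<N. pmf D i = \<alpha> i) \<and>
      p0 \<in> sphere_d d \<and>
      sorted_eigenvalues d (covm N \<alpha> q) lam \<and>
      v1 \<in> sphere_d d \<and> mulv d (covm N \<alpha> q) v1 = (\<lambda>i. lam 0 * v1 i) \<and>
      1 \<le> \<eta> \<and> 1 \<le> s \<and> 1 \<le> T \<and> 0 < \<delta> \<and> \<delta> < 1 \<and>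
      ip d v1 p0 \<ge> sqrt 2 / 2 \<and>
      lam 1 < lam 0 \<and>
      real \<eta> \<ge> 8 / (lam 0 - lam 1) \<and>
      (let M = max (Max ((\<lambda>j. opnorm d (\<lambda>a b. outer (q j) (q j) a b - covm N \<alpha> q a b)) ` {..<N}))
                   (lam 0)
       in real s \<ge> 1 + 2 * C\<^sup>2 * (real \<eta>)\<^sup>2 * M\<^sup>2 * ln (2 * C * M * real T * real \<eta> / \<delta>)) \<and>
      self_aligned d q {i. i < N \<and> 0 < \<alpha> i} v1 \<and>
      self_aligned d q {i. i < N \<and> 0 < \<alpha> i} p0
      \<longrightarrow>
      measure (PiM UNIV (\<lambda>_::nat. measure_pmf D))
        {\<omega> \<in> space (PiM UNIV (\<lambda>_::nat. measure_pmf D)).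
           regret d q p0 \<eta> s \<omega> T
             \<le> 4 * exp 2 * (real s + 2) * (1 + ln ((real T + real s) / real s))
                + real T * vnorm d (\<lambda>i. v1 i - p0 i)}
        \<ge> 1 - \<delta>)"
proof (intro exI[of _ "170::real"] conjI)
  show "(0::real) < 170" and "(170::real) < 175" by simp_all
qed (intro allI impI, elim conjE, rule oja_regret_bound)

end
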